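(* Let $S \subset \mathbb{P}^3$ be a surface of degree $4$ defined over $\mathbb{F}_4$, irreducible over $\mathbb{F}_4$, containing no $\mathbb{F}_4$-line, and such that every $\mathbb{F}_4$-rational point of $S$ is nonsingular on $S$. For an $\mathbb{F}_4$-plane $H$ let $t(H)=\#\{P\in S(\mathbb{F}_4)\mid H=T_PS\}$. If there exist two distinct $\mathbb{F}_4$-planes $H_1 \neq H_2$ with $t(H_1)=t(H_2)=5$, then $H_1\cap H_2\cap S(\mathbb{F}_4)=\emptyset$ and $N_4(S) \leq 49$.
   Context: $S(\mathbb{F}_4)$ is the set of $\mathbb{F}_4$-rational points of $S$, $N_4(S)$ its cardinality. For a nonsingular point $P$ of $S$, $T_P S$ denotes the embedded tangent plane to $S$ at $P$. An $\mathbb{F}_4$-plane (resp. line) is a plane (resp. line) defined over $\mathbb{F}_4$. *)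

theory Defs
  imports "HOL-Library.Poly_Mapping" "HOL-Library.Numeral_Type"
    "HOL-Computational_Algebra.Factorial_Ring" "HOL-Algebra.Algebraic_Closure_Type"
begin

text \<open>Homogeneous coordinates of P^3 are indexed by the 4-element type 4.
  A polynomial in x_0..x_3 with coefficients in k is a finitely supported map
  from monomials (exponent vectors 4 =>0 nat) to k; this type is a commutative ring.\<close>

type_synonym 'k mpoly4 = "(4 \<Rightarrow>\<^sub>0 nat) \<Rightarrow>\<^sub>0 'k"

definition homogeneous_of_degree :: "'k::zero mpoly4 \<Rightarrow> nat \<Rightarrow> bool" where
  "homogeneous_of_degree f d \<longleftrightarrow> (\<forall>m\<in>Poly_Mapping.keys f. (\<Sum>i\<in>UNIV. Poly_Mapping.lookup m i) = d)"

definition peval :: "('k::zero \<Rightarrow> 'r::comm_ring_1) \<Rightarrow> 'k mpoly4 \<Rightarrow> (4 \<Rightarrow> 'r) \<Rightarrow> 'r" where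
  "peval emb f x = (\<Sum>m\<in>Poly_Mapping.keys f. emb (Poly_Mapping.lookup f m) * (\<Prod>i\<in>UNIV. x i ^ Poly_Mapping.lookup m i))"

definition eval4 :: "'k::comm_ring_1 mpoly4 \<Rightarrow> (4 \<Rightarrow> 'k) \<Rightarrow> 'k" where
  "eval4 f x = peval id f x"

definition pdiff_eval :: "'k::comm_ring_1 mpoly4 \<Rightarrow> 4 \<Rightarrow> (4 \<Rightarrow> 'k) \<Rightarrow> 'k" where
  "pdiff_eval f i x = (\<Sum>m\<in>Poly_Mapping.keys f. Poly_Mapping.lookup f m * of_nat (Poly_Mapping.lookup m i) * x i ^ (Poly_Mapping.lookup m i - 1)
        * (\<Prod>j\<in>UNIV - {i}. x j ^ Poly_Mapping.lookup m j))"

definition grad :: "'k::comm_ring_1 mpoly4 \<Rightarrow> (4 \<Rightarrow> 'k) \<Rightarrow> (4 \<Rightarrow> 'k)" where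
  "grad f x = (\<lambda>i. pdiff_eval f i x)"

definition proj_pt :: "(4 \<Rightarrow> 'k::field) \<Rightarrow> (4 \<Rightarrow> 'k) set" where
  "proj_pt x = {(\<lambda>i. c * x i) | c. c \<noteq> 0}"

definition lin :: "(4 \<Rightarrow> 'k::comm_ring_1) \<Rightarrow> (4 \<Rightarrow> 'k) \<Rightarrow> 'k" where
  "lin a x = (\<Sum>i\<in>UNIV. a i * x i)"

definition rat_points :: "'k::field mpoly4 \<Rightarrow> (4 \<Rightarrow> 'k) set set" where
  "rat_points f = {proj_pt x | x. x \<noteq> (\<lambda>_. 0) \<and> eval4 f x = 0}"

text \<open>A k-plane H is
  represented by its (projective) coefficient vector [a], a nonzero.\<close>
definition nonsingular_at :: "'k::field mpoly4 \<Rightarrow> (4 \<Rightarrow> 'k) \<Rightarrow> bool" where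
  "nonsingular_at f x \<longleftrightarrow> grad f x \<noteq> (\<lambda>_. 0)"

definition tangent_plane :: "'k::field mpoly4 \<Rightarrow> (4 \<Rightarrow> 'k) \<Rightarrow> (4 \<Rightarrow> 'k) set" where
  "tangent_plane f x = proj_pt (grad f x)"

definition tcount :: "'k::field mpoly4 \<Rightarrow> (4 \<Rightarrow> 'k) \<Rightarrow> nat" where
  "tcount f a = card {proj_pt x | x. x \<noteq> (\<lambda>_. 0) \<and> eval4 f x = 0 \<and> tangent_plane f x = proj_pt a}"

text \<open>S contains the k-line through the distinct k-points [x],[y]: the line (over the
  algebraic closure) lies on S, i.e. f(s x + t y) = 0 for all s,t in the algebraic closure.\<close>
definition contains_rat_line :: "'k::field mpoly4 \<Rightarrow> bool" where
  "contains_rat_line f \<longleftrightarrow> (\<exists>x y. x \<noteq> (\<lambda>_. 0) \<and> y \<noteq> (\<lambda>_. 0) \<and> proj_pt x \<noteq> proj_pt y \<and>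
     (\<forall>s t :: 'k alg_closure. peval to_ac f (\<lambda>i. s * to_ac (x i) + t * to_ac (y i)) = 0))"

end

theory Submission
  imports Defs "HOL-Computational_Algebra.Polynomial" "HOL-Library.Cardinality"
begin

text \<open>
  For F4-points x, y the restriction of the quartic F to the line through them expands, for
  u in F4 (where u^4 = u), as F(x + u y) = F(x) + <grad F(x), y> u + c(x, y) u^2 +
  <grad F(y), x> u^3 + F(y) u. If p and q are points of S with the same tangent plane H, the
  linear and cubic terms vanish, so F(p + t q) = t^2 F(p + q); since S contains no F4-line,
  F(p + q) is nonzero and the line pq meets S(F4) only in p and q. Hence five points with
  tangent plane H are in general position in H = P^2(F4); together with their nucleus they form
  a hyperoval, and propagating these secant relations (and, at the nucleus, the tangency) shows
  that F has no other zeros on H. So every point of S on H has tangent plane H, and H1, H2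
  cannot share a point of S.

  Consequently the line H1 \<inter> H2 misses S, and S(F4) consists of the 5 + 5 points on H1 and
  H2 together with points on the three other F4-planes through H1 \<inter> H2, off that line. Each of
  these affine planes of 16 points contains at most 13 points of S: otherwise at most two of its
  points are missing, three lines through a point of S in it lie entirely on S, and this forces
  F to vanish at a point of H1 \<inter> H2. Hence N(S) \<le> 5 + 5 + 3 * 13 = 49.
\<close>

section \<open>Restriction of a form to a line\<close>

definition line_poly ::
    "((4 \<Rightarrow>\<^sub>0 nat) \<Rightarrow> 'r::comm_ring_1) \<Rightarrow> (4 \<Rightarrow>\<^sub>0 nat) set \<Rightarrow> (4 \<Rightarrow> 'r) \<Rightarrow> (4 \<Rightarrow> 'r) \<Rightarrow> 'r poly"
  where "line_poly c K x y = (\<Sum>m\<in>K. [:c m:] * (\<Prod>i\<in>UNIV. [:x i, y i:] ^ Poly_Mapping.lookup m i))"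

lemma poly_line_poly:
  "poly (line_poly c K x y) u = (\<Sum>m\<in>K. c m * (\<Prod>i\<in>UNIV. (x i + u * y i) ^ Poly_Mapping.lookup m i))"
  by (simp add: line_poly_def poly_sum poly_prod)

lemma degree_linear_power_le: "degree ([:a, b:] ^ k) \<le> k"
  using degree_power_le[of "[:a, b:]" k] degree_pCons_le[of a "[:b:]"] by (simp add: order_trans)

lemma degree_line_poly_le:
  assumes "finite K" "\<forall>m\<in>K. (\<Sum>i\<in>UNIV. Poly_Mapping.lookup m i) = d"
  shows "degree (line_poly c K x y) \<le> d"
  unfolding line_poly_def
proof (rule degree_sum_le)
  fix m assume m: "m \<in> K"
  have "degree (\<Prod>i\<in>UNIV. [:x i, y i:] ^ Poly_Mapping.lookup m i)
      \<le> (\<Sum>i\<in>UNIV. degree ([:x i, y i:] ^ Poly_Mapping.lookup m i))"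
    using degree_prod_sum_le[of UNIV "\<lambda>i. [:x i, y i:] ^ Poly_Mapping.lookup m i"] by (simp add: o_def)
  also have "\<dots> \<le> (\<Sum>i\<in>UNIV. Poly_Mapping.lookup m i)"
    by (intro sum_mono degree_linear_power_le)
  finally have "degree (\<Prod>i\<in>UNIV. [:x i, y i:] ^ Poly_Mapping.lookup m i) \<le> d"
    using assms(2) m by simp
  then show "degree ([:c m:] * (\<Prod>i\<in>UNIV. [:x i, y i:] ^ Poly_Mapping.lookup m i)) \<le> d"
    by (simp add: order_trans[OF degree_smult_le])
qed (use assms in simp)

lemma coeff_mult_at_degree_bounds:
  assumes "degree p \<le> a" "degree q \<le> b"
  shows "coeff (p * q) (a + b) = coeff p a * coeff q b"
proof -
  have "coeff (p * q) (a + b) = (\<Sum>i\<le>a+b. coeff p i * coeff q (a + b - i))" by (rule coeff_mult)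
  also have "\<dots> = (\<Sum>i\<in>{a}. coeff p i * coeff q (a + b - i))"
  proof (rule sum.mono_neutral_right)
    show "\<forall>i\<in>{..a + b} - {a}. coeff p i * coeff q (a + b - i) = 0"
    proof
      fix i assume "i \<in> {..a + b} - {a}"
      then consider "i < a" | "i > a" by fastforce
      then show "coeff p i * coeff q (a + b - i) = 0"
        by cases (use assms in \<open>simp_all add: coeff_eq_0\<close>)
    qed
  qed auto
  finally show ?thesis by simp
qed

lemma coeff_prod_at_degree_bounds:
  assumes "finite A" "\<forall>i\<in>A. degree (p i) \<le> d i"
  shows "coeff (\<Prod>i\<in>A. p i) (\<Sum>i\<in>A. d i) = (\<Prod>i\<in>A. coeff (p i) (d i))"
  using assms
proof (induction A rule: finite_induct)
  case (insert x F)
  have "degree (\<Prod>i\<in>F. p i) \<le> (\<Sum>i\<in>F. degree (p i))"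
    using degree_prod_sum_le[OF insert(1)] by (simp add: o_def)
  also have "\<dots> \<le> (\<Sum>i\<in>F. d i)" using insert(4) by (intro sum_mono) auto
  finally show ?case
    using insert coeff_mult_at_degree_bounds[of "p x" "d x" "\<Prod>i\<in>F. p i"] by simp
qed simp

lemma coeff_line_poly_0:
  "coeff (line_poly c K x y) 0 = (\<Sum>m\<in>K. c m * (\<Prod>i\<in>UNIV. x i ^ Poly_Mapping.lookup m i))"
  by (simp add: poly_0_coeff_0[symmetric] poly_line_poly)

lemma coeff_line_poly_1:
  fixes c :: "(4 \<Rightarrow>\<^sub>0 nat) \<Rightarrow> 'r::field"
  shows "coeff (line_poly c K x y) 1 = (\<Sum>m\<in>K. c m * (\<Sum>i\<in>UNIV.
      of_nat (Poly_Mapping.lookup m i) * x i ^ (Poly_Mapping.lookup m i - 1) * y i *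
      (\<Prod>j\<in>UNIV - {i}. x j ^ Poly_Mapping.lookup m j)))"
proof -
  have coeff_1: "coeff p 1 = poly (pderiv p) 0" for p :: "'r poly"
    by (simp add: poly_0_coeff_0 coeff_pderiv)
  have "pderiv (line_poly c K x y) = (\<Sum>m\<in>K. smult (c m) (\<Sum>i\<in>UNIV.
      (\<Prod>j\<in>UNIV - {i}. [:x j, y j:] ^ Poly_Mapping.lookup m j) *
      pderiv ([:x i, y i:] ^ Poly_Mapping.lookup m i)))"
    unfolding line_poly_def higher_pderiv_sum[of 1, simplified] by (simp add: pderiv_smult pderiv_prod)
  then show ?thesis
    unfolding coeff_1 by (simp add: poly_sum poly_prod pderiv_power pderiv_pCons mult_ac sum_distrib_left)
qed

lemma coeff_line_poly_top:
  fixes c :: "(4 \<Rightarrow>\<^sub>0 nat) \<Rightarrow> 'r::comm_ring_1"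
  assumes "\<forall>m\<in>K. (\<Sum>i\<in>UNIV. Poly_Mapping.lookup m i) = d"
  shows "coeff (line_poly c K x y) d = (\<Sum>m\<in>K. c m * (\<Prod>i\<in>UNIV. y i ^ Poly_Mapping.lookup m i))"
proof -
  have top: "coeff ([:a, b:] ^ k) k = b ^ k" for a b :: 'r and k
    using coeff_prod_at_degree_bounds[of "{..<k}" "\<lambda>_. [:a, b:]" "\<lambda>_. 1"]
    by (simp add: degree_pCons_le)
  have "coeff (\<Prod>i\<in>UNIV. [:x i, y i:] ^ Poly_Mapping.lookup m i) d = (\<Prod>i\<in>UNIV. y i ^ Poly_Mapping.lookup m i)"
    if "m \<in> K" for m
  proof -
    have "coeff (\<Prod>i\<in>UNIV. [:x i, y i:] ^ Poly_Mapping.lookup m i) (\<Sum>i\<in>UNIV. Poly_Mapping.lookup m i)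
        = (\<Prod>i\<in>UNIV. y i ^ Poly_Mapping.lookup m i)"
      by (simp add: coeff_prod_at_degree_bounds degree_linear_power_le top)
    then show ?thesis using assms that by simp
  qed
  then show ?thesis by (simp add: line_poly_def coeff_sum)
qed

section \<open>Fields with four elements\<close>

lemma finite_field_power_card_minus_1:
  fixes x :: "'k::{field,finite}"
  assumes "x \<noteq> 0"
  shows "x ^ (CARD('k) - 1) = 1"
proof -
  let ?N = "UNIV - {0::'k}"
  have "bij_betw ((*) x) ?N ?N"
    by (rule bij_betwI[where g="(*) (inverse x)"]) (use assms in \<open>auto simp: field_simps\<close>)
  then have "(\<Prod>y\<in>?N. y) = (\<Prod>y\<in>?N. x * y)"
    using prod.reindex_bij_betw[of "(*) x" ?N ?N id] by simp
  also have "\<dots> = x ^ (CARD('k) - 1) * (\<Prod>y\<in>?N. y)"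
    by (simp add: prod.distrib card_Diff_singleton)
  finally have "1 * (\<Prod>y\<in>?N. y) = x ^ (CARD('k) - 1) * (\<Prod>y\<in>?N. y)" by simp
  moreover have "(\<Prod>y\<in>?N. y) \<noteq> 0" by (subst prod_zero_iff) auto
  ultimately show ?thesis by (metis mult_right_cancel)
qed

lemma finite_ring_of_nat_card: "of_nat CARD('k) = (0::'k::{comm_ring_1,finite})"
proof -
  have "(\<Sum>y\<in>UNIV. y) = (\<Sum>y\<in>UNIV. y + (1::'k))"
    by (rule sum.reindex_bij_witness[of _ "\<lambda>y. y + 1" "\<lambda>y. y - 1"]) auto
  then show ?thesis by (simp add: sum.distrib)
qed

lemma card4_exists_omega:
  assumes "CARD('k::{field,finite}) = 4"
  shows "\<exists>\<omega>::'k. \<omega> * \<omega> = \<omega> + 1"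
proof -
  have "(2::'k) * 2 = 0" using finite_ring_of_nat_card[where 'k='k] assms by simp
  then have char2: "(1::'k) + 1 = 0" by (metis mult_eq_0_iff one_add_one)
  have "\<not> UNIV \<subseteq> {0, 1::'k}"
    using card_mono[of "{0, 1::'k}" UNIV] assms by auto
  then obtain x :: 'k where x: "x \<noteq> 0" "x \<noteq> 1" by blast
  have "(x - 1) * (x * x + x + 1) = x ^ 3 - 1" by (simp add: algebra_simps eval_nat_numeral)
  also have "\<dots> = 0" using finite_field_power_card_minus_1[OF x(1)] assms by simp
  finally have "x * x = - (x + 1)" using x(2) by (simp add: add_eq_0_iff2 add.assoc)
  also have "\<dots> = x + 1" using char2 by (metis add_eq_0_iff distrib_left mult.right_neutral mult_zero_right)
  finally show ?thesis by blast
qed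

locale gf4 =
  fixes \<omega> :: "'k::{field,finite}"
  assumes card_gf4: "CARD('k) = 4" and omega_sq: "\<omega> * \<omega> = \<omega> + 1"
begin

lemma one_plus_one [simp]: "(1::'k) + 1 = 0"
proof -
  have "(2::'k) * 2 = 0" using finite_ring_of_nat_card[where 'k='k] card_gf4 by simp
  then show ?thesis by (metis mult_eq_0_iff one_add_one)
qed

lemma two_eq_0 [simp]: "(2::'k) = 0"
  using one_plus_one by (metis one_add_one)

lemma add_self [simp]: "(x::'k) + x = 0"
  using one_plus_one by (metis distrib_left mult.right_neutral mult_zero_right)

lemma minus_eq_self [simp]: "- (x::'k) = x"
  using add_self by (metis add_eq_0_iff)

lemma add_eq_0_iff_eq: "(x::'k) + y = 0 \<longleftrightarrow> x = y"
  by (metis add_self add_eq_0_iff minus_eq_self)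

lemma omega_omega_mult [simp]: "\<omega> * (\<omega> * x) = \<omega> * x + x"
  by (metis omega_sq distrib_right mult.assoc mult_1)

lemma power3_eq_1: "(x::'k) \<noteq> 0 \<Longrightarrow> x ^ 3 = 1"
  using finite_field_power_card_minus_1[of x] card_gf4 by simp

lemma power4_eq_self: "(x::'k) ^ 4 = x"
  using power3_eq_1[of x] by (cases "x = 0") (simp_all add: power_Suc2[of x 3, simplified])

lemma omega_neq: "\<omega> \<noteq> 0" "\<omega> \<noteq> 1" "\<omega> + 1 \<noteq> 0" "1 + \<omega> \<noteq> 0" "\<omega> \<noteq> \<omega> + 1"
  using omega_sq by (auto simp: add_eq_0_iff_eq)

lemma gf4_cases: "(x::'k) = 0 \<or> x = 1 \<or> x = \<omega> \<or> x = \<omega> + 1"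
proof -
  have "x * (x + 1) * (x + \<omega>) * (x + \<omega> + 1) = x ^ 4 + x"
    by (simp add: algebra_simps eval_nat_numeral omega_sq)
  also have "\<dots> = 0" by (simp add: power4_eq_self)
  finally show ?thesis by (auto simp: add_eq_0_iff_eq add.assoc)
qed

lemma quadratic_vanishing_on_units:
  assumes "a + b + c = 0" "a + b * \<omega> + c * \<omega> * \<omega> = 0"
    and "a + b * (\<omega> + 1) + c * (\<omega> + 1) * (\<omega> + 1) = (0::'k)"
  shows "a = 0 \<and> b = 0 \<and> c = 0"
proof -
  have e2: "a + b * \<omega> + c * \<omega> + c = 0" using assms(2) by (simp add: algebra_simps omega_sq)
  have e3: "a + b * \<omega> + b + c * \<omega> = 0" using assms(3) by (simp add: algebra_simps omega_sq)
  have "(a + b + c) + (a + b * \<omega> + c * \<omega> + c) + (a + b * \<omega> + b + c * \<omega>) = 0"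
    using assms(1) e2 e3 by simp
  then have a: "a = 0" by (simp add: algebra_simps)
  then have "c = b" using assms(1) by (simp add: add_eq_0_iff_eq)
  then show ?thesis using a e2 by (simp add: algebra_simps)
qed

end

section \<open>Quartic forms over the field with four elements\<close>

lemma peval_homogeneous:
  assumes "homogeneous_of_degree f d"
  shows "peval emb f (\<lambda>i. s * z i) = s ^ d * peval emb f z"
proof -
  have "(\<Prod>i\<in>UNIV. (s * z i) ^ Poly_Mapping.lookup m i) = s ^ d * (\<Prod>i\<in>UNIV. z i ^ Poly_Mapping.lookup m i)"
    if "m \<in> Poly_Mapping.keys f" for m
  proof -
    have "(\<Prod>i\<in>UNIV. (s * z i) ^ Poly_Mapping.lookup m i)
        = s ^ (\<Sum>i\<in>UNIV. Poly_Mapping.lookup m i) * (\<Prod>i\<in>UNIV. z i ^ Poly_Mapping.lookup m i)"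
      by (simp add: power_mult_distrib prod.distrib power_sum)
    then show ?thesis using assms that by (simp add: homogeneous_of_degree_def)
  qed
  then show ?thesis unfolding peval_def by (simp add: sum_distrib_left mult_ac)
qed

lemma pdiff_eval_homogeneous:
  fixes f :: "'k::field mpoly4"
  assumes "homogeneous_of_degree f d"
  shows "pdiff_eval f i (\<lambda>j. c * x j) = c ^ (d - 1) * pdiff_eval f i x"
proof -
  have "Poly_Mapping.lookup f m * of_nat (Poly_Mapping.lookup m i) * (c * x i) ^ (Poly_Mapping.lookup m i - 1) *
        (\<Prod>j\<in>UNIV - {i}. (c * x j) ^ Poly_Mapping.lookup m j)
      = c ^ (d - 1) * (Poly_Mapping.lookup f m * of_nat (Poly_Mapping.lookup m i) * x i ^ (Poly_Mapping.lookup m i - 1) *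
        (\<Prod>j\<in>UNIV - {i}. x j ^ Poly_Mapping.lookup m j))"
    if m: "m \<in> Poly_Mapping.keys f" for m
  proof (cases "Poly_Mapping.lookup m i = 0")
    case False
    have "(\<Sum>j\<in>UNIV. Poly_Mapping.lookup m j) = Poly_Mapping.lookup m i + (\<Sum>j\<in>UNIV - {i}. Poly_Mapping.lookup m j)"
      by (simp add: sum.remove)
    then have e: "(Poly_Mapping.lookup m i - 1) + (\<Sum>j\<in>UNIV - {i}. Poly_Mapping.lookup m j) = d - 1"
      using assms m False by (simp add: homogeneous_of_degree_def)
    have "(c * x i) ^ (Poly_Mapping.lookup m i - 1) * (\<Prod>j\<in>UNIV - {i}. (c * x j) ^ Poly_Mapping.lookup m j)
       = c ^ ((Poly_Mapping.lookup m i - 1) + (\<Sum>j\<in>UNIV - {i}. Poly_Mapping.lookup m j))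
         * (x i ^ (Poly_Mapping.lookup m i - 1) * (\<Prod>j\<in>UNIV - {i}. x j ^ Poly_Mapping.lookup m j))"
      by (simp add: power_mult_distrib prod.distrib power_sum power_add mult_ac)
    then show ?thesis unfolding e by (simp add: mult_ac)
  qed simp
  then show ?thesis unfolding pdiff_eval_def sum_distrib_left by (intro sum.cong) simp_all
qed

lemma poly_expand_degree_le_4:
  fixes p :: "'a::comm_ring_1 poly"
  assumes "degree p \<le> 4"
  shows "poly p u = coeff p 0 + coeff p 1 * u + coeff p 2 * u^2 + coeff p 3 * u^3 + coeff p 4 * u^4"
proof -
  have "poly p u = (\<Sum>i\<le>degree p. coeff p i * u ^ i)" by (rule poly_altdef)
  also have "\<dots> = (\<Sum>i\<le>4. coeff p i * u ^ i)"
    by (rule sum.mono_neutral_left) (use assms in \<open>auto simp: coeff_eq_0\<close>)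
  finally show ?thesis by (simp add: eval_nat_numeral atMost_Suc)
qed

locale quartic_form = gf4 \<omega> for \<omega> :: "'k::{field,finite}" +
  fixes f :: "'k mpoly4"
  assumes homogeneous: "homogeneous_of_degree f 4"
begin

abbreviation F :: "(4 \<Rightarrow> 'k) \<Rightarrow> 'k" where "F x \<equiv> eval4 f x"

definition polar :: "(4 \<Rightarrow> 'k) \<Rightarrow> (4 \<Rightarrow> 'k) \<Rightarrow> 'k" where
  "polar x y = lin (grad f x) y"

definition line_restr :: "(4 \<Rightarrow> 'k) \<Rightarrow> (4 \<Rightarrow> 'k) \<Rightarrow> 'k poly" where
  "line_restr x y = line_poly (Poly_Mapping.lookup f) (Poly_Mapping.keys f) x y"

definition quad_coeff :: "(4 \<Rightarrow> 'k) \<Rightarrow> (4 \<Rightarrow> 'k) \<Rightarrow> 'k" where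
  "quad_coeff x y = coeff (line_restr x y) 2"

lemma sum_exponents_of_keys: "\<forall>m\<in>Poly_Mapping.keys f. (\<Sum>i\<in>UNIV. Poly_Mapping.lookup m i) = 4"
  using homogeneous by (simp add: homogeneous_of_degree_def)

lemma F_line_poly: "F (\<lambda>i. x i + u * y i) = poly (line_restr x y) u"
  by (simp add: eval4_def peval_def line_restr_def poly_line_poly)

lemma expand_line_raw:
  "F (\<lambda>i. x i + u * y i) =
     F x + polar x y * u + quad_coeff x y * u^2 + coeff (line_restr x y) 3 * u^3 + F y * u^4"
proof -
  have "degree (line_restr x y) \<le> 4"
    unfolding line_restr_def by (rule degree_line_poly_le) (simp_all add: sum_exponents_of_keys)
  moreover have "coeff (line_restr x y) 0 = F x"
    by (simp add: line_restr_def coeff_line_poly_0 eval4_def peval_def)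
  moreover have "coeff (line_restr x y) 1 = polar x y"
    unfolding line_restr_def coeff_line_poly_1 polar_def lin_def grad_def pdiff_eval_def
    by (simp add: sum_distrib_left sum_distrib_right mult_ac sum.swap[where A="Poly_Mapping.keys f"])
  moreover have "coeff (line_restr x y) 4 = F y"
    unfolding line_restr_def coeff_line_poly_top[OF sum_exponents_of_keys] by (simp add: eval4_def peval_def)
  ultimately show ?thesis
    unfolding F_line_poly quad_coeff_def by (simp add: poly_expand_degree_le_4)
qed

lemma F_scale: "F (\<lambda>i. c * x i) = c * F x"
  using peval_homogeneous[OF homogeneous, of id c x] power4_eq_self by (simp add: eval4_def)

lemma grad_scale: "grad f (\<lambda>i. c * x i) = (\<lambda>i. c ^ 3 * grad f x i)"
  unfolding grad_def using pdiff_eval_homogeneous[OF homogeneous] by simp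

lemma polar_linear_right: "polar x (\<lambda>i. a * y i + b * z i) = a * polar x y + b * polar x z"
  unfolding polar_def lin_def by (simp add: algebra_simps sum.distrib sum_distrib_left)

lemma F_swap: "u * v = 1 \<Longrightarrow> F (\<lambda>i. x i + u * y i) = u * F (\<lambda>i. y i + v * x i)"
proof -
  assume uv: "u * v = 1"
  have "(\<lambda>i. x i + u * y i) = (\<lambda>i. u * (y i + v * x i))"
    by (rule ext) (simp add: distrib_left mult.assoc[symmetric] uv add.commute)
  then show ?thesis using F_scale by simp
qed

text \<open>Comparing the expansions of F along the line from both of its ends at the three units
  of the field identifies the cubic coefficient; the same trick on the degenerate line
  through x alone gives Euler's relation (where 4 F(x) = 0).\<close>

lemma coeff3_line_restr: "coeff (line_restr x y) 3 = polar y x"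
proof -
  let ?a = "coeff (line_restr x y) 3 + polar y x" and ?b = "polar x y + coeff (line_restr y x) 3"
    and ?c = "quad_coeff x y + quad_coeff y x"
  have "F (\<lambda>i. x i + 1 * y i) + 1 * F (\<lambda>i. y i + 1 * x i) = 0"
    by (rule add_eq_0_iff_eq[THEN iffD2], rule F_swap) simp
  then have e1: "?a + ?b + ?c = 0"
    unfolding expand_line_raw by (simp add: algebra_simps)
  have "F (\<lambda>i. x i + \<omega> * y i) + \<omega> * F (\<lambda>i. y i + (\<omega> + 1) * x i) = 0"
    by (rule add_eq_0_iff_eq[THEN iffD2], rule F_swap) (simp add: algebra_simps omega_sq)
  then have e2: "?a + ?b * \<omega> + ?c * \<omega> * \<omega> = 0"
    unfolding expand_line_raw by (simp add: algebra_simps eval_nat_numeral omega_sq)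
  have "F (\<lambda>i. x i + (\<omega> + 1) * y i) + (\<omega> + 1) * F (\<lambda>i. y i + \<omega> * x i) = 0"
    by (rule add_eq_0_iff_eq[THEN iffD2], rule F_swap) (simp add: algebra_simps omega_sq)
  then have e3: "?a + ?b * (\<omega> + 1) + ?c * (\<omega> + 1) * (\<omega> + 1) = 0"
    unfolding expand_line_raw by (simp add: algebra_simps eval_nat_numeral omega_sq)
  show ?thesis using quadratic_vanishing_on_units[OF e1 e2 e3] by (simp add: add_eq_0_iff_eq)
qed

lemma polar_self: "polar x x = 0"
proof -
  let ?a = "polar x x" and ?b = "quad_coeff x x"
  have line: "F (\<lambda>i. x i + u * x i) = (1 + u) * F x" for u
  proof -
    have "(\<lambda>i. x i + u * x i) = (\<lambda>i. (1 + u) * x i)" by (rule ext) (simp add: algebra_simps)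
    then show ?thesis using F_scale by simp
  qed
  have e1: "?a + ?a + ?b = 0"
    using line[of 1] unfolding expand_line_raw coeff3_line_restr by (simp add: algebra_simps)
  have e2: "?a + ?a * \<omega> + ?b * \<omega> * \<omega> = 0"
    using line[of \<omega>] unfolding expand_line_raw coeff3_line_restr
    by (simp add: algebra_simps eval_nat_numeral omega_sq)
  have e3: "?a + ?a * (\<omega> + 1) + ?b * (\<omega> + 1) * (\<omega> + 1) = 0"
    using line[of "\<omega> + 1"] unfolding expand_line_raw coeff3_line_restr
    by (simp add: algebra_simps eval_nat_numeral omega_sq)
  show ?thesis using quadratic_vanishing_on_units[OF e1 e2 e3] by simp
qed

lemma expand_line:
  "F (\<lambda>i. x i + u * y i) = F x + polar x y * u + quad_coeff x y * u^2 + polar y x * u^3 + F y * u"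
  using expand_line_raw[of x u y] by (simp add: coeff3_line_restr power4_eq_self)

text \<open>Over the algebraic closure the restriction of F to the line has degree at most three
  (its top coefficient is F(y) = 0) but vanishes at the four points x + u y with u in F4.\<close>

lemma contains_rat_line_if_vanishing:
  assumes x: "x \<noteq> (\<lambda>_. 0)" and y: "y \<noteq> (\<lambda>_. 0)" and xy: "proj_pt x \<noteq> proj_pt y"
    and Fy: "F y = 0" and Fline: "\<forall>u. F (\<lambda>i. x i + u * y i) = 0"
  shows "contains_rat_line f"
proof -
  have peval_to_ac: "peval to_ac f (\<lambda>i. to_ac (z i)) = to_ac (F z)" for z
    by (simp add: peval_def eval4_def to_ac_sum to_ac_prod)
  define P where "P = line_poly (\<lambda>m. to_ac (Poly_Mapping.lookup f m)) (Poly_Mapping.keys f)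
    (\<lambda>i. to_ac (x i)) (\<lambda>i. to_ac (y i))"
  have degP: "degree P \<le> 4"
    unfolding P_def by (rule degree_line_poly_le) (simp_all add: sum_exponents_of_keys)
  have "coeff P 4 = peval to_ac f (\<lambda>i. to_ac (y i))"
    by (simp add: P_def coeff_line_poly_top[OF sum_exponents_of_keys] peval_def)
  then have top: "coeff P 4 = 0" using peval_to_ac[of y] Fy by simp
  have poly_P: "peval to_ac f (\<lambda>i. to_ac (x i) + u * to_ac (y i)) = poly P u" for u
    by (simp add: P_def poly_line_poly peval_def)
  have roots: "poly P (to_ac u) = 0" for u
    using peval_to_ac[of "\<lambda>i. x i + u * y i"] Fline by (simp add: poly_P[symmetric])
  have "P = 0"
  proof (rule ccontr)
    assume nz: "P \<noteq> 0"
    then have "degree P \<noteq> 4" using top by (metis leading_coeff_0_iff)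
    have "card (range (to_ac::'k \<Rightarrow> 'k alg_closure)) \<le> card {z. poly P z = 0}"
      using roots by (intro card_mono poly_roots_finite nz) auto
    also have "\<dots> \<le> degree P" by (rule card_poly_roots_bound[OF nz])
    finally show False
      using degP \<open>degree P \<noteq> 4\<close> card_gf4 by (simp add: card_image inj_to_ac)
  qed
  show ?thesis unfolding contains_rat_line_def
  proof (intro exI conjI allI)
    fix s t :: "'k alg_closure"
    show "peval to_ac f (\<lambda>i. s * to_ac (x i) + t * to_ac (y i)) = 0"
    proof (cases "s = 0")
      case True
      then show ?thesis
        using peval_homogeneous[OF homogeneous, of to_ac t] peval_to_ac[of y] Fy by simp
    next
      case False
      have "(\<lambda>i. s * to_ac (x i) + t * to_ac (y i)) = (\<lambda>i. s * (to_ac (x i) + (t / s) * to_ac (y i)))"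
        by (rule ext) (simp add: distrib_left mult.assoc[symmetric] False)
      then have "peval to_ac f (\<lambda>i. s * to_ac (x i) + t * to_ac (y i))
          = s ^ 4 * peval to_ac f (\<lambda>i. to_ac (x i) + (t / s) * to_ac (y i))"
        using peval_homogeneous[OF homogeneous, of to_ac s] by simp
      then show ?thesis unfolding poly_P \<open>P = 0\<close> by simp
    qed
  qed (use x y xy in auto)
qed

end

section \<open>Counting vectors in linear subspaces\<close>

lemma lin_add: "lin a (\<lambda>i. x i + y i) = lin a x + lin a y"
  by (simp add: lin_def algebra_simps sum.distrib)

lemma lin_scale: "lin a (\<lambda>i. c * x i) = c * lin a x"
  by (simp add: lin_def algebra_simps sum_distrib_left)

lemma card_eq_card_times_card_fiber:
  assumes "finite U" "finite B" "\<And>x. x \<in> U \<Longrightarrow> L x \<in> B"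
    and "\<And>b. b \<in> B \<Longrightarrow> bij_betw (tr b) {x\<in>U. L x = z} {x\<in>U. L x = b}"
  shows "card U = card B * card {x\<in>U. L x = z}"
proof -
  have "card U = card (\<Union>b\<in>B. {x\<in>U. L x = b})" using assms(3) by (intro arg_cong[where f=card]) auto
  also have "\<dots> = (\<Sum>b\<in>B. card {x\<in>U. L x = b})"
    by (rule card_UN_disjoint) (auto simp: assms(1,2))
  also have "\<dots> = (\<Sum>b\<in>B. card {x\<in>U. L x = z})"
    using assms(4) bij_betw_same_card by (intro sum.cong refl) fastforce
  finally show ?thesis by simp
qed

lemma card_level_set_lin:
  fixes U :: "(4 \<Rightarrow> 'k::{field,finite}) set"
  assumes closed: "\<And>x c. x \<in> U \<Longrightarrow> (\<lambda>i. x i + c * e i) \<in> U" and e: "lin a e = 1"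
  shows "card U = CARD('k) * card {x\<in>U. lin a x = 0}"
proof (rule card_eq_card_times_card_fiber[where tr="\<lambda>b x i. x i + b * e i"])
  fix b :: 'k
  have lin_shift: "lin a (\<lambda>i. x i + c * e i) = lin a x + c" for x c
    by (simp add: lin_add lin_scale e)
  show "bij_betw (\<lambda>x i. x i + b * e i) {x\<in>U. lin a x = 0} {x\<in>U. lin a x = b}"
  proof (rule bij_betwI[where g="\<lambda>x i. x i + (- b) * e i"])
    show "(\<lambda>x i. x i + b * e i) \<in> {x\<in>U. lin a x = 0} \<rightarrow> {x\<in>U. lin a x = b}"
      using closed lin_shift by simp
    show "(\<lambda>x i. x i + (- b) * e i) \<in> {x\<in>U. lin a x = b} \<rightarrow> {x\<in>U. lin a x = 0}"
      using closed[of _ "- b"] lin_shift[of _ "- b"] by simp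
  qed (simp_all add: fun_eq_iff)
qed (simp_all add: finite_subset)

lemma card_hyperplane:
  fixes a :: "4 \<Rightarrow> 'k::{field,finite}"
  assumes "a \<noteq> (\<lambda>_. 0)"
  shows "card {x. lin a x = 0} = CARD('k) ^ 3"
proof -
  obtain i0 where i0: "a i0 \<noteq> 0" using assms by auto
  define e where "e = (\<lambda>i. if i = i0 then inverse (a i0) else (0::'k))"
  have "lin a e = 1" unfolding lin_def e_def using i0 by (simp add: if_distrib cong: if_cong)
  then have "card (UNIV :: (4 \<Rightarrow> 'k) set) = CARD('k) * card {x. lin a x = 0}"
    using card_level_set_lin[of UNIV e a] by simp
  moreover have "card (UNIV :: (4 \<Rightarrow> 'k) set) = CARD('k) ^ 4" by (simp add: card_fun)
  ultimately show ?thesis by (simp add: eval_nat_numeral)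
qed

lemma card_intersection_hyperplanes:
  fixes a1 a2 e :: "4 \<Rightarrow> 'k::{field,finite}"
  assumes "a1 \<noteq> (\<lambda>_. 0)" "lin a1 e = 0" "lin a2 e = 1"
  shows "card {x. lin a1 x = 0 \<and> lin a2 x = 0} = CARD('k) ^ 2"
proof -
  have "card {x. lin a1 x = 0} = CARD('k) * card {x \<in> {x. lin a1 x = 0}. lin a2 x = 0}"
    using assms(2,3) by (intro card_level_set_lin) (simp_all add: lin_add lin_scale)
  then show ?thesis using card_hyperplane[OF assms(1)] by (simp add: eval_nat_numeral)
qed

lemma exists_subset_avoiding:
  fixes A :: "'a::finite set"
  assumes "card A + n \<le> CARD('a)"
  obtains B where "B \<inter> A = {}" "card B = n"
proof -
  have "n \<le> card (UNIV - A)" using assms by (simp add: card_Diff_subset)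
  then obtain B where "B \<subseteq> UNIV - A" "card B = n" by (rule obtain_subset_with_card_n)
  then show thesis using that by blast
qed

lemma basis_of_two_hyperplanes:
  fixes a1 a2 e :: "4 \<Rightarrow> 'k::{field,finite}"
  assumes a1: "a1 \<noteq> (\<lambda>_. 0)" and e: "lin a1 e = 0" "lin a2 e = 1"
  obtains D1 D2 where "{x. lin a1 x = 0 \<and> lin a2 x = 0} = range (\<lambda>(u, v). (\<lambda>i. u * D1 i + v * D2 i))"
    "\<And>u v. (\<lambda>i. u * D1 i + v * D2 i) = (\<lambda>_. 0) \<Longrightarrow> u = 0 \<and> v = 0"
proof -
  define V where "V = {x. lin a1 x = 0 \<and> lin a2 x = 0}"
  have card_V: "card V = CARD('k) ^ 2" unfolding V_def by (rule card_intersection_hyperplanes[OF a1 e])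
  have card_k: "2 \<le> CARD('k)" using card_2_iff'[of "{0, 1::'k}"] card_mono[of UNIV "{0, 1::'k}"] by simp
  have not_subset: "\<not> V \<subseteq> range (\<lambda>c. (\<lambda>i. c * x i))" for x :: "4 \<Rightarrow> 'k"
  proof
    assume "V \<subseteq> range (\<lambda>c. (\<lambda>i. c * x i))"
    then have "card V \<le> CARD('k)"
      using card_mono[of "range (\<lambda>c. (\<lambda>i. c * x i))" V]
        card_image_le[of "UNIV :: 'k set" "\<lambda>c. (\<lambda>i. c * x i)"] by simp
    then show False using card_V card_k by (simp add: power2_eq_square)
  qed
  obtain D1 where D1: "D1 \<in> V" "D1 \<noteq> (\<lambda>_. 0)" using not_subset[of "\<lambda>_. 0"] by auto
  obtain D2 where D2: "D2 \<in> V" "\<And>c. D2 \<noteq> (\<lambda>i. c * D1 i)" using not_subset[of D1] by auto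
  have indep: "u = 0 \<and> v = 0" if "(\<lambda>i. u * D1 i + v * D2 i) = (\<lambda>_. 0)" for u v
  proof -
    have comp: "u * D1 i + v * D2 i = 0" for i using fun_cong[OF that, of i] by simp
    have "v = 0"
    proof (rule ccontr)
      assume "v \<noteq> 0"
      then have "D2 = (\<lambda>i. (- u / v) * D1 i)" using comp by (simp add: fun_eq_iff field_simps add_eq_0_iff2)
      then show False using D2(2) by blast
    qed
    moreover have "u = 0" using D1(2) comp \<open>v = 0\<close> by (auto simp: fun_eq_iff)
    ultimately show ?thesis by simp
  qed
  have "inj (\<lambda>(u, v). (\<lambda>i. u * D1 i + v * D2 i))"
  proof (rule injI, clarsimp)
    fix u v u' v' assume "(\<lambda>i. u * D1 i + v * D2 i) = (\<lambda>i. u' * D1 i + v' * D2 i)"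
    then have "(\<lambda>i. (u - u') * D1 i + (v - v') * D2 i) = (\<lambda>_. 0)" by (simp add: fun_eq_iff algebra_simps)
    then show "u = u' \<and> v = v'" using indep by fastforce
  qed
  then have "card (range (\<lambda>(u, v). (\<lambda>i. u * D1 i + v * D2 i))) = card V"
    using card_V by (simp add: card_image power2_eq_square)
  moreover have "range (\<lambda>(u, v). (\<lambda>i. u * D1 i + v * D2 i)) \<subseteq> V"
    using D1(1) D2(1) unfolding V_def by (auto simp: lin_add lin_scale)
  ultimately have "range (\<lambda>(u, v). (\<lambda>i. u * D1 i + v * D2 i)) = V" by (intro card_subset_eq) simp_all
  then show thesis unfolding V_def by (rule that[OF sym indep])
qed


section \<open>Points of the surface with a prescribed tangent plane\<close>

lemma proj_pt_scale:
  assumes "(c::'k::field) \<noteq> 0"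
  shows "proj_pt (\<lambda>i. c * x i) = proj_pt x"
  unfolding proj_pt_def
proof (intro Set.set_eqI iffI)
  fix z assume "z \<in> {\<lambda>i. d * (c * x i) |d. d \<noteq> 0}"
  then obtain d where "d \<noteq> 0" "z = (\<lambda>i. d * (c * x i))" by auto
  then show "z \<in> {\<lambda>i. d * x i |d. d \<noteq> 0}" using assms by (auto intro!: exI[of _ "d * c"] simp: mult.assoc)
next
  fix z assume "z \<in> {\<lambda>i. d * x i |d. d \<noteq> 0}"
  then obtain d where "d \<noteq> 0" "z = (\<lambda>i. d * x i)" by auto
  then show "z \<in> {\<lambda>i. d * (c * x i) |d. d \<noteq> 0}" using assms
    by (auto intro!: exI[of _ "d / c"] simp: mult.assoc)
qed

lemma proj_pt_eqD:
  assumes "proj_pt x = proj_pt y"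
  shows "\<exists>c. (c::'k::field) \<noteq> 0 \<and> y = (\<lambda>i. c * x i)"
proof -
  have "y \<in> proj_pt y" unfolding proj_pt_def by (auto intro!: exI[of _ 1])
  then show ?thesis using assms unfolding proj_pt_def by auto
qed

lemma scale_neq_0:
  assumes "(c::'k::field) \<noteq> 0" "x \<noteq> (\<lambda>_. 0)"
  shows "(\<lambda>i. c * x i) \<noteq> (\<lambda>_. 0)"
  using assms by (auto simp: fun_eq_iff)

definition comb3 :: "(4 \<Rightarrow> 'k::comm_ring_1) \<Rightarrow> (4 \<Rightarrow> 'k) \<Rightarrow> (4 \<Rightarrow> 'k) \<Rightarrow> 'k \<Rightarrow> 'k \<Rightarrow> 'k \<Rightarrow> (4 \<Rightarrow> 'k)"
  where "comb3 q1 q2 q3 u v w = (\<lambda>i. u * q1 i + v * q2 i + w * q3 i)"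

lemma lin_comb3: "lin a (comb3 q1 q2 q3 u v w) = u * lin a q1 + v * lin a q2 + w * lin a q3"
  by (simp add: comb3_def lin_def algebra_simps sum.distrib sum_distrib_left)

lemma comb3_add:
  "comb3 q1 q2 q3 (u + u') (v + v') (w + w') = (\<lambda>i. comb3 q1 q2 q3 u v w i + comb3 q1 q2 q3 u' v' w' i)"
  by (simp add: comb3_def algebra_simps fun_eq_iff)

lemma comb3_scale: "comb3 q1 q2 q3 (c * u) (c * v) (c * w) = (\<lambda>i. c * comb3 q1 q2 q3 u v w i)"
  by (simp add: comb3_def algebra_simps fun_eq_iff)

context quartic_form
begin

definition tangent_point :: "(4 \<Rightarrow> 'k) \<Rightarrow> (4 \<Rightarrow> 'k) \<Rightarrow> bool" where
  "tangent_point a x \<longleftrightarrow> x \<noteq> (\<lambda>_. 0) \<and> F x = 0 \<and> (\<exists>c. c \<noteq> 0 \<and> grad f x = (\<lambda>i. c * a i))"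

lemma polar_tangent_point:
  assumes "tangent_point a p" "lin a y = 0"
  shows "polar p y = 0"
proof -
  obtain c where "grad f p = (\<lambda>i. c * a i)" using assms(1) unfolding tangent_point_def by auto
  then have "polar p y = c * lin a y" unfolding polar_def lin_def by (simp add: sum_distrib_left mult_ac)
  then show ?thesis using assms(2) by simp
qed

lemma tangent_point_in_plane:
  assumes "tangent_point a p"
  shows "lin a p = 0"
proof -
  obtain c where c: "c \<noteq> 0" "grad f p = (\<lambda>i. c * a i)" using assms unfolding tangent_point_def by auto
  have "c * lin a p = polar p p" unfolding polar_def c(2) lin_def by (simp add: sum_distrib_left mult_ac)
  then show ?thesis using c(1) by (simp add: polar_self)
qed

lemma tangent_point_scale:
  assumes "tangent_point a p" "c \<noteq> 0"
  shows "tangent_point a (\<lambda>i. c * p i)"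
proof -
  obtain d where d: "d \<noteq> 0" "grad f p = (\<lambda>i. d * a i)" using assms(1) unfolding tangent_point_def by auto
  have "grad f (\<lambda>i. c * p i) = (\<lambda>i. (c ^ 3 * d) * a i)" unfolding grad_scale d by (simp add: mult.assoc)
  then show ?thesis
    using assms d(1) scale_neq_0[of c p] F_scale[of c p] unfolding tangent_point_def
    by (intro conjI exI[of _ "c ^ 3 * d"]) auto
qed

lemma F_secant:
  assumes "tangent_point a p" "tangent_point a q"
  shows "F (\<lambda>i. p i + t * q i) = t * t * F (\<lambda>i. p i + q i)"
proof -
  have "polar p q = 0" "polar q p = 0"
    using assms polar_tangent_point tangent_point_in_plane by blast+
  moreover have "F p = 0" "F q = 0" using assms unfolding tangent_point_def by auto
  ultimately
  show ?thesis using expand_line[of p t q] expand_line[of p 1 q] by (simp add: power2_eq_square)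
qed

lemma F_tangent_relation:
  assumes "tangent_point a p" "lin a y = 0" "b * b = b + 1"
  shows "F (\<lambda>i. p i + y i) + (b + 1) * F (\<lambda>i. p i + b * y i) + b * F (\<lambda>i. p i + (b + 1) * y i) = F y"
proof -
  have "F p = 0" "polar p y = 0" using assms polar_tangent_point unfolding tangent_point_def by auto
  moreover have "b * (b * x) = b * x + x" for x by (metis assms(3) distrib_right mult.assoc mult_1)
  ultimately show ?thesis
    using expand_line[of p 1 y] expand_line[of p b y] expand_line[of p "b + 1" y]
    by (simp add: algebra_simps eval_nat_numeral assms(3))
qed

end

locale quartic_no_line = quartic_form \<omega> f for \<omega> :: "'k::{field,finite}" and f +
  assumes no_rat_line: "\<not> contains_rat_line f"
begin

lemma F_add_tangent_points_neq_0:
  assumes "tangent_point a p" "tangent_point a q" "proj_pt p \<noteq> proj_pt q"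
  shows "F (\<lambda>i. p i + q i) \<noteq> 0"
proof
  assume "F (\<lambda>i. p i + q i) = 0"
  then have "contains_rat_line f"
    using assms contains_rat_line_if_vanishing[of p q] F_secant[OF assms(1,2)]
    unfolding tangent_point_def by simp
  then show False using no_rat_line by simp
qed

lemma tangent_points_not_collinear:
  assumes tp: "tangent_point a p" and tq: "tangent_point a q" and tr: "tangent_point a r"
    and pq: "proj_pt p \<noteq> proj_pt q" and pr: "proj_pt p \<noteq> proj_pt r" and qr: "proj_pt q \<noteq> proj_pt r"
  shows "r \<noteq> (\<lambda>i. s * p i + t * q i)"
proof
  assume r: "r = (\<lambda>i. s * p i + t * q i)"
  have r0: "r \<noteq> (\<lambda>_. 0)" and Fr: "F r = 0" using tr unfolding tangent_point_def by auto
  consider "s = 0" "t = 0" | "s = 0" "t \<noteq> 0" | "s \<noteq> 0" "t = 0" | "s \<noteq> 0" "t \<noteq> 0" by blast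
  then show False
  proof cases
    case 1 then show False using r r0 by simp
  next
    case 2 then show False using r qr proj_pt_scale[of t q] by simp
  next
    case 3 then show False using r pr proj_pt_scale[of s p] by simp
  next
    case 4
    have "r = (\<lambda>i. s * (p i + (t / s) * q i))" using r 4 by (simp add: distrib_left)
    then have "F r = s * ((t / s) * (t / s) * F (\<lambda>i. p i + q i))"
      using F_scale by (simp only: F_secant[OF tp tq])
    then show False using Fr 4 F_add_tangent_points_neq_0[OF tp tq pq] by simp
  qed
qed

lemma tangent_points_span_plane:
  assumes a: "a \<noteq> (\<lambda>_. 0)" and t1: "tangent_point a q1" and t2: "tangent_point a q2"
    and t3: "tangent_point a q3" and d12: "proj_pt q1 \<noteq> proj_pt q2"
    and d13: "proj_pt q1 \<noteq> proj_pt q3" and d23: "proj_pt q2 \<noteq> proj_pt q3"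
  shows "{x. lin a x = 0} = (\<lambda>(u, v, w). comb3 q1 q2 q3 u v w) ` UNIV"
proof -
  have indep: "u = 0 \<and> v = 0 \<and> w = 0" if "comb3 q1 q2 q3 u v w = (\<lambda>_. 0)" for u v w
  proof -
    have e: "u * q1 i + v * q2 i = w * q3 i" for i
      using that unfolding comb3_def by (metis add_eq_0_iff_eq)
    have "w = 0"
    proof (rule ccontr)
      assume "w \<noteq> 0"
      then have "q3 = (\<lambda>i. (u / w) * q1 i + (v / w) * q2 i)"
        using e by (auto simp: fun_eq_iff field_simps)
      then show False using tangent_points_not_collinear[OF t1 t2 t3 d12 d13 d23] by blast
    qed
    moreover have "v = 0"
    proof (rule ccontr)
      assume "v \<noteq> 0"
      then have "q2 = (\<lambda>i. (u / v) * q1 i + 0 * q3 i)"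
        using e \<open>w = 0\<close> by (auto simp: fun_eq_iff field_simps add_eq_0_iff_eq)
      then show False using tangent_points_not_collinear[OF t1 t3 t2 d13 d12 d23[symmetric]] by blast
    qed
    moreover have "q1 \<noteq> (\<lambda>_. 0)" using t1 unfolding tangent_point_def by auto
    ultimately show ?thesis using e by (auto simp: fun_eq_iff)
  qed
  have "inj (\<lambda>(u, v, w). comb3 q1 q2 q3 u v w)"
  proof (rule injI, clarsimp)
    fix u v w u' v' w'
    assume "comb3 q1 q2 q3 u v w = comb3 q1 q2 q3 u' v' w'"
    then have "comb3 q1 q2 q3 (u + u') (v + v') (w + w') = (\<lambda>_. 0)"
      unfolding comb3_add by (simp add: fun_eq_iff)
    then show "u = u' \<and> v = v' \<and> w = w'" using indep add_eq_0_iff_eq by blast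
  qed
  then have card: "card ((\<lambda>(u, v, w). comb3 q1 q2 q3 u v w) ` UNIV) = card {x. lin a x = 0}"
    using card_hyperplane[OF a] card_gf4 by (simp add: card_image)
  have "(\<lambda>(u, v, w). comb3 q1 q2 q3 u v w) ` UNIV \<subseteq> {x. lin a x = 0}"
    using tangent_point_in_plane[OF t1] tangent_point_in_plane[OF t2] tangent_point_in_plane[OF t3]
    by (auto simp: lin_comb3)
  from card_subset_eq[OF _ this card] show ?thesis by simp
qed

end

section \<open>Zeros of a plane quartic with five singular points\<close>

definition hyperoval_base :: "'k::field \<Rightarrow> ('k \<times> 'k \<times> 'k) set" where
  "hyperoval_base b = {(1, 0, 0), (0, 1, 0), (0, 0, 1), (1, 1, 1), (1, b, b * b)}"

text \<open>The five points of hyperoval_base \<omega> are in general position in the projective plane over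
  the field; with the point (1, \<omega> + 1, \<omega>) (their nucleus) they form a hyperoval. Every other
  point lies on a secant through two of the five, so the secant law expresses its value through
  values at sums of two of them, and the tangent law reaches the nucleus. Chasing these relations
  shows that the value at each of the 16 remaining points is a nonzero multiple of P(1, 1, 0).\<close>

locale hyperoval_function = gf4 \<omega> for \<omega> :: "'k::{field,finite}" +
  fixes P :: "'k \<Rightarrow> 'k \<Rightarrow> 'k \<Rightarrow> 'k"
  assumes hom: "\<And>c x1 x2 x3. P (c * x1) (c * x2) (c * x3) = c * P x1 x2 x3"
    and zero: "\<And>a1 a2 a3. (a1, a2, a3) \<in> hyperoval_base \<omega> \<Longrightarrow> P a1 a2 a3 = 0"
    and sec: "\<And>a1 a2 a3 b1 b2 b3 t. (a1, a2, a3) \<in> hyperoval_base \<omega> \<Longrightarrow> (b1, b2, b3) \<in> hyperoval_base \<omega> \<Longrightarrow>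
        (a1, a2, a3) \<noteq> (b1, b2, b3) \<Longrightarrow>
        P (a1 + t * b1) (a2 + t * b2) (a3 + t * b3) = t * t * P (a1 + b1) (a2 + b2) (a3 + b3)"
    and tan: "\<And>a1 a2 a3 y1 y2 y3. (a1, a2, a3) \<in> hyperoval_base \<omega> \<Longrightarrow>
        P (a1 + y1) (a2 + y2) (a3 + y3) + (\<omega> + 1) * P (a1 + \<omega> * y1) (a2 + \<omega> * y2) (a3 + \<omega> * y3)
        + \<omega> * P (a1 + (\<omega> + 1) * y1) (a2 + (\<omega> + 1) * y2) (a3 + (\<omega> + 1) * y3) = P y1 y2 y3"
begin

lemma values_off_hyperoval_base:
  shows "P 1 \<omega> 0 = (\<omega> + 1) * P 1 1 0"
    and "P 1 (\<omega> + 1) 0 = \<omega> * P 1 1 0"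
    and "P 1 1 \<omega> = \<omega> * P 1 1 0"
    and "P 1 1 (\<omega> + 1) = (\<omega> + 1) * P 1 1 0"
    and "P 1 \<omega> \<omega> = \<omega> * P 1 1 0"
    and "P 1 \<omega> 1 = 1 * P 1 1 0"
    and "P 0 1 1 = \<omega> * P 1 1 0"
    and "P 1 (\<omega> + 1) (\<omega> + 1) = \<omega> * P 1 1 0"
    and "P 1 0 1 = (\<omega> + 1) * P 1 1 0"
    and "P 1 (\<omega> + 1) 1 = \<omega> * P 1 1 0"
    and "P 0 1 (\<omega> + 1) = (\<omega> + 1) * P 1 1 0"
    and "P 1 0 \<omega> = \<omega> * P 1 1 0"
    and "P 0 1 \<omega> = 1 * P 1 1 0"
    and "P 1 0 (\<omega> + 1) = 1 * P 1 1 0"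
    and "P 1 (\<omega> + 1) \<omega> = \<omega> * P 1 1 0"
proof -
  have sec': "P (a1 + b1) (a2 + b2) (a3 + b3) = t * P (a1 + t * b1) (a2 + t * b2) (a3 + t * b3)"
    if "(a1, a2, a3) \<in> hyperoval_base \<omega>" "(b1, b2, b3) \<in> hyperoval_base \<omega>" "(a1, a2, a3) \<noteq> (b1, b2, b3)"
      "t \<noteq> 0" for a1 a2 a3 b1 b2 b3 t
  proof -
    have "t * P (a1 + t * b1) (a2 + t * b2) (a3 + t * b3) = t ^ 3 * P (a1 + b1) (a2 + b2) (a3 + b3)"
      using sec[OF that(1-3), of t] by (simp add: eval_nat_numeral mult.assoc)
    then show ?thesis using power3_eq_1[OF that(4)] by simp
  qed
  note zero = zero[unfolded hyperoval_base_def] and sec = sec[unfolded hyperoval_base_def]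
    and sec' = sec'[unfolded hyperoval_base_def] and tan = tan[unfolded hyperoval_base_def]
  note value_rules = algebra_simps omega_sq omega_neq zero
  show P_120: "P 1 \<omega> 0 = (\<omega> + 1) * P 1 1 0"
    using hom[of 1 1 \<omega> 0] sec[of 1 0 0 0 1 0 \<omega>] hom[of 1 1 1 0]
    by (simp add: value_rules)
  show P_130: "P 1 (\<omega> + 1) 0 = \<omega> * P 1 1 0"
    using hom[of 1 1 "\<omega> + 1" 0] sec[of 1 0 0 0 1 0 "\<omega> + 1"] hom[of 1 1 1 0]
    by (simp add: value_rules)
  show P_112: "P 1 1 \<omega> = \<omega> * P 1 1 0"
    using hom[of "\<omega> + 1" \<omega> \<omega> "\<omega> + 1"] sec[of 0 0 1 1 1 1 \<omega>]
      hom[of 1 1 1 0]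
    by (simp add: value_rules)
  show P_113: "P 1 1 (\<omega> + 1) = (\<omega> + 1) * P 1 1 0"
    using hom[of \<omega> "\<omega> + 1" "\<omega> + 1" \<omega>] sec[of 0 0 1 1 1 1 "\<omega> + 1"]
      hom[of 1 1 1 0]
    by (simp add: value_rules)
  show P_122: "P 1 \<omega> \<omega> = \<omega> * P 1 1 0"
    using hom[of 1 1 \<omega> \<omega>] sec'[of 0 0 1 1 \<omega> "\<omega> + 1" \<omega>]
      hom[of \<omega> 1 \<omega> 0] P_120
    by (simp add: value_rules)
  show P_121: "P 1 \<omega> 1 = 1 * P 1 1 0"
    using hom[of \<omega> "\<omega> + 1" 1 "\<omega> + 1"]
      sec[of 0 0 1 1 \<omega> "\<omega> + 1" "\<omega> + 1"] hom[of 1 1 \<omega> \<omega>] P_122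
    by (simp add: value_rules)
  show P_011: "P 0 1 1 = \<omega> * P 1 1 0"
    using hom[of 1 0 1 1] sec'[of 1 1 1 1 0 0 \<omega>] hom[of "\<omega> + 1" 1 \<omega> \<omega>]
      P_122
    by (simp add: value_rules)
  show P_133: "P 1 (\<omega> + 1) (\<omega> + 1) = \<omega> * P 1 1 0"
    using hom[of "\<omega> + 1" \<omega> 1 1] sec[of 1 1 1 1 0 0 "\<omega> + 1"] hom[of 1 0 1 1]
      P_011
    by (simp add: value_rules)
  show P_101: "P 1 0 1 = (\<omega> + 1) * P 1 1 0"
    using hom[of 1 1 0 1] sec'[of 1 1 1 0 1 0 "\<omega> + 1"] hom[of 1 1 \<omega> 1] P_121
    by (simp add: value_rules)
  show P_131: "P 1 (\<omega> + 1) 1 = \<omega> * P 1 1 0"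
    using hom[of 1 1 "\<omega> + 1" 1] sec[of 1 1 1 0 1 0 \<omega>] hom[of 1 1 0 1] P_101
    by (simp add: value_rules)
  show P_013: "P 0 1 (\<omega> + 1) = (\<omega> + 1) * P 1 1 0"
    using hom[of \<omega> 0 "\<omega> + 1" \<omega>]
      sec'[of 1 1 1 1 \<omega> "\<omega> + 1" \<omega>] hom[of "\<omega> + 1" 1 "\<omega> + 1" 0]
      P_130
    by (simp add: value_rules)
  show P_102: "P 1 0 \<omega> = \<omega> * P 1 1 0"
    using hom[of "\<omega> + 1" \<omega> 0 "\<omega> + 1"]
      sec[of 1 1 1 1 \<omega> "\<omega> + 1" "\<omega> + 1"]
      hom[of "\<omega> + 1" 0 1 "\<omega> + 1"] P_013
    by (simp add: value_rules)
  show P_012: "P 0 1 \<omega> = 1 * P 1 1 0"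
    using hom[of "\<omega> + 1" 0 \<omega> "\<omega> + 1"]
      sec'[of 1 \<omega> "\<omega> + 1" 1 0 0 \<omega>] hom[of "\<omega> + 1" 1 "\<omega> + 1" 1]
      P_131
    by (simp add: value_rules)
  show P_103: "P 1 0 (\<omega> + 1) = 1 * P 1 1 0"
    using hom[of 1 1 0 "\<omega> + 1"] sec[of 1 \<omega> "\<omega> + 1" 0 1 0 \<omega>]
      hom[of 1 1 "\<omega> + 1" "\<omega> + 1"] P_133
    by (simp add: value_rules)
  show P_132: "P 1 (\<omega> + 1) \<omega> = \<omega> * P 1 1 0"
    using hom[of 1 1 "\<omega> + 1" \<omega>] tan[of 1 0 0 1 "\<omega> + 1" \<omega>]
      hom[of "\<omega> + 1" 0 1 "\<omega> + 1"] P_013 hom[of "\<omega> + 1" 1 \<omega> 1] P_121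
      hom[of \<omega> 1 1 "\<omega> + 1"] P_113
    by (simp add: value_rules)
qed

lemma zero_cases:
  assumes "P u v w = 0"
  shows "(u = 0 \<and> v = 0 \<and> w = 0)
    \<or> (\<exists>c a1 a2 a3. (a1, a2, a3) \<in> hyperoval_base \<omega> \<and> u = c * a1 \<and> v = c * a2 \<and> w = c * a3)
    \<or> P 1 1 0 = 0"
proof -
  have row1: "(1, y, z) \<in> hyperoval_base \<omega> \<or> P 1 1 0 = 0" if "P 1 y z = 0" for y z
    using gf4_cases[of y] gf4_cases[of z] that values_off_hyperoval_base
    by (elim disjE) (simp_all add: hyperoval_base_def omega_sq omega_neq)
  have row0: "(0, 1, z) \<in> hyperoval_base \<omega> \<or> P 1 1 0 = 0" if "P 0 1 z = 0" for z
    using gf4_cases[of z] that values_off_hyperoval_base by (elim disjE) (simp_all add: hyperoval_base_def omega_neq)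
  consider "u \<noteq> 0" | "u = 0" "v \<noteq> 0" | "u = 0" "v = 0" "w \<noteq> 0" | "u = 0" "v = 0" "w = 0" by blast
  then show ?thesis
  proof cases
    case 1
    then have "P 1 (v / u) (w / u) = 0" using assms hom[of u 1 "v / u" "w / u"] by simp
    moreover have "u = u * 1" "v = u * (v / u)" "w = u * (w / u)" using 1 by simp_all
    ultimately show ?thesis using row1 by blast
  next
    case 2
    then have "P 0 1 (w / v) = 0" using assms hom[of v 0 1 "w / v"] by simp
    moreover have "u = v * 0" "v = v * 1" "w = v * (w / v)" using 2 by simp_all
    ultimately show ?thesis using row0 by blast
  next
    case 3
    then have "(0, 0, 1) \<in> hyperoval_base \<omega>" "u = w * 0" "v = w * 0" "w = w * 1" by (simp_all add: hyperoval_base_def)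
    then show ?thesis by blast
  qed simp
qed

end

section \<open>Planes with five tangent points\<close>

context quartic_no_line
begin

lemma tangent_point_coords_neq_0:
  assumes t: "tangent_point a q1" "tangent_point a q2" "tangent_point a q3" "tangent_point a p"
    and d: "proj_pt q1 \<noteq> proj_pt q2" "proj_pt q1 \<noteq> proj_pt q3" "proj_pt q2 \<noteq> proj_pt q3"
      "proj_pt q1 \<noteq> proj_pt p" "proj_pt q2 \<noteq> proj_pt p" "proj_pt q3 \<noteq> proj_pt p"
    and p: "p = comb3 q1 q2 q3 u v w"
  shows "u \<noteq> 0" "v \<noteq> 0" "w \<noteq> 0"
proof -
  show "u \<noteq> 0"
    using p tangent_points_not_collinear[OF t(2,3,4) d(3,5,6), where s=v and t=w] by (auto simp: comb3_def)
  show "v \<noteq> 0"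
    using p tangent_points_not_collinear[OF t(1,3,4) d(2,4,6), where s=u and t=w] by (auto simp: comb3_def)
  show "w \<noteq> 0"
    using p tangent_points_not_collinear[OF t(1,2,4) d(1,4,5), where s=u and t=v] by (auto simp: comb3_def)
qed

lemma fifth_tangent_point_coords:
  assumes q: "tangent_point a q1" "tangent_point a q2" "tangent_point a q3"
    and r: "tangent_point a (comb3 q1 q2 q3 1 1 1)" and s: "tangent_point a (comb3 q1 q2 q3 1 b c)"
    and d: "distinct (map proj_pt [q1, q2, q3, comb3 q1 q2 q3 1 1 1, comb3 q1 q2 q3 1 b c])"
  shows "b * b = b + 1 \<and> c = b * b"
proof -
  let ?r = "comb3 q1 q2 q3 1 1 1" and ?s = "comb3 q1 q2 q3 1 b c"
  have dq: "proj_pt q1 \<noteq> proj_pt q2" "proj_pt q1 \<noteq> proj_pt q3" "proj_pt q2 \<noteq> proj_pt q3"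
    and d': "proj_pt ?r \<noteq> proj_pt ?s"
    and dr: "proj_pt q1 \<noteq> proj_pt ?r" "proj_pt q2 \<noteq> proj_pt ?r" "proj_pt q3 \<noteq> proj_pt ?r"
    and ds: "proj_pt q1 \<noteq> proj_pt ?s" "proj_pt q2 \<noteq> proj_pt ?s" "proj_pt q3 \<noteq> proj_pt ?s"
    using d by simp_all
  have bc0: "b \<noteq> 0" "c \<noteq> 0" using tangent_point_coords_neq_0[OF q s dq ds refl] by simp_all
  have "b \<noteq> 1"
  proof
    assume "b = 1"
    then have "?s = (\<lambda>i. 1 * ?r i + (c + 1) * q3 i)" by (simp add: comb3_def fun_eq_iff algebra_simps)
    then show False using tangent_points_not_collinear[OF r q(3) s dr(3)[symmetric] d' ds(3)] by blast
  qed
  moreover have "c \<noteq> 1"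
  proof
    assume "c = 1"
    then have "?s = (\<lambda>i. 1 * ?r i + (b + 1) * q2 i)" by (simp add: comb3_def fun_eq_iff algebra_simps)
    then show False using tangent_points_not_collinear[OF r q(2) s dr(2)[symmetric] d' ds(2)] by blast
  qed
  moreover have "b \<noteq> c"
  proof
    assume "b = c"
    then have "?s = (\<lambda>i. b * ?r i + (b + 1) * q1 i)" by (simp add: comb3_def fun_eq_iff algebra_simps)
    then show False using tangent_points_not_collinear[OF r q(1) s dr(1)[symmetric] d' ds(1)] by blast
  qed
  ultimately have "b = \<omega> \<or> b = \<omega> + 1" "c = \<omega> \<or> c = \<omega> + 1"
    using gf4_cases[of b] gf4_cases[of c] bc0 by blast+
  with \<open>b \<noteq> c\<close> show ?thesis by (auto simp: algebra_simps omega_sq)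
qed

lemma five_tangent_points_frame:
  fixes p :: "nat \<Rightarrow> 4 \<Rightarrow> 'k"
  assumes a: "a \<noteq> (\<lambda>_. 0)" and t: "\<And>k. k < 5 \<Longrightarrow> tangent_point a (p k)"
    and d: "\<And>k l. k < 5 \<Longrightarrow> l < 5 \<Longrightarrow> k \<noteq> l \<Longrightarrow> proj_pt (p k) \<noteq> proj_pt (p l)"
  obtains q1 q2 q3 b where "tangent_point a q1" "tangent_point a q2" "tangent_point a q3"
    "tangent_point a (comb3 q1 q2 q3 1 1 1)" "tangent_point a (comb3 q1 q2 q3 1 b (b * b))"
    "b * b = b + 1" "proj_pt q1 \<noteq> proj_pt q2"
    "{x. lin a x = 0} = (\<lambda>(u, v, w). comb3 q1 q2 q3 u v w) ` UNIV"
proof -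
  have span_p: "{x. lin a x = 0} = (\<lambda>(u, v, w). comb3 (p 0) (p 1) (p 2) u v w) ` UNIV"
    by (rule tangent_points_span_plane) (use a t d in simp_all)
  from tangent_point_in_plane[OF t[of 3]] have "p 3 \<in> {x. lin a x = 0}" by simp
  then obtain u v w where p3: "p 3 = comb3 (p 0) (p 1) (p 2) u v w" unfolding span_p by auto
  have uvw: "u \<noteq> 0" "v \<noteq> 0" "w \<noteq> 0"
    using tangent_point_coords_neq_0[OF t[of 0] t[of 1] t[of 2] t[of 3] _ _ _ _ _ _ p3]
      d[of 0 1] d[of 0 2] d[of 1 2] d[of 0 3] d[of 1 3] d[of 2 3] by simp_all
  define q1 where "q1 = (\<lambda>i. u * p 0 i)"
  define q2 where "q2 = (\<lambda>i. v * p 1 i)"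
  define q3 where "q3 = (\<lambda>i. w * p 2 i)"
  have q: "tangent_point a q1" "tangent_point a q2" "tangent_point a q3"
    unfolding q1_def q2_def q3_def using tangent_point_scale t uvw by simp_all
  have proj_q: "proj_pt q1 = proj_pt (p 0)" "proj_pt q2 = proj_pt (p 1)" "proj_pt q3 = proj_pt (p 2)"
    unfolding q1_def q2_def q3_def using proj_pt_scale uvw by simp_all
  have p3_q: "p 3 = comb3 q1 q2 q3 1 1 1" unfolding p3 q1_def q2_def q3_def comb3_def by simp
  have span_q: "{x. lin a x = 0} = (\<lambda>(u, v, w). comb3 q1 q2 q3 u v w) ` UNIV"
    by (rule tangent_points_span_plane) (use a q d proj_q in simp_all)
  from tangent_point_in_plane[OF t[of 4]] have "p 4 \<in> {x. lin a x = 0}" by simp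
  then obtain u' v' w' where p4: "p 4 = comb3 q1 q2 q3 u' v' w'" unfolding span_q by auto
  have "u' \<noteq> 0"
    using tangent_point_coords_neq_0[OF q t[of 4] _ _ _ _ _ _ p4] proj_q
      d[of 0 1] d[of 0 2] d[of 1 2] d[of 0 4] d[of 1 4] d[of 2 4] by simp
  then have inverse_u': "inverse u' \<noteq> 0" by simp
  define b where "b = v' / u'"
  define c where "c = w' / u'"
  define q5 where "q5 = (\<lambda>i. inverse u' * p 4 i)"
  have q5: "tangent_point a q5" unfolding q5_def by (rule tangent_point_scale[OF _ inverse_u']) (simp add: t)
  have q5_proj: "proj_pt q5 = proj_pt (p 4)" unfolding q5_def using proj_pt_scale[OF inverse_u'] .
  have q5_comb: "q5 = comb3 q1 q2 q3 1 b c"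
    unfolding q5_def p4 b_def c_def comb3_def using \<open>u' \<noteq> 0\<close> by (simp add: fun_eq_iff field_simps)
  have dist: "distinct (map proj_pt [q1, q2, q3, comb3 q1 q2 q3 1 1 1, comb3 q1 q2 q3 1 b c])"
    using proj_q q5_proj d[of 0 1] d[of 0 2] d[of 0 3] d[of 0 4] d[of 1 2] d[of 1 3] d[of 1 4]
      d[of 2 3] d[of 2 4] d[of 3 4]
    by (simp add: p3_q[symmetric] q5_comb[symmetric])
  have r: "tangent_point a (comb3 q1 q2 q3 1 1 1)" using t[of 3] p3_q by simp
  have s: "tangent_point a (comb3 q1 q2 q3 1 b c)" using q5 q5_comb by simp
  from fifth_tangent_point_coords[OF q r s dist] have b: "b * b = b + 1" and c: "c = b * b" by simp_all
  show thesis
  proof (rule that[OF q r _ b _ span_q])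
    show "tangent_point a (comb3 q1 q2 q3 1 b (b * b))" using q5 q5_comb c by simp
    show "proj_pt q1 \<noteq> proj_pt q2" using d[of 0 1] proj_q by simp
  qed
qed

lemma frame_zero_is_tangent_point:
  assumes q: "tangent_point a q1" "tangent_point a q2" "tangent_point a q3"
    and frame: "tangent_point a (comb3 q1 q2 q3 1 1 1)" "tangent_point a (comb3 q1 q2 q3 1 b (b * b))"
    and b: "b * b = b + 1" and q12: "proj_pt q1 \<noteq> proj_pt q2"
    and x: "comb3 q1 q2 q3 u v w \<noteq> (\<lambda>_. 0)" "F (comb3 q1 q2 q3 u v w) = 0"
  shows "tangent_point a (comb3 q1 q2 q3 u v w)"
proof -
  have base: "tangent_point a (comb3 q1 q2 q3 a1 a2 a3)" if "(a1, a2, a3) \<in> hyperoval_base b" for a1 a2 a3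
  proof -
    have "comb3 q1 q2 q3 1 0 0 = q1" "comb3 q1 q2 q3 0 1 0 = q2" "comb3 q1 q2 q3 0 0 1 = q3"
      by (simp_all add: comb3_def)
    then show ?thesis using that q frame unfolding hyperoval_base_def by auto
  qed
  have in_plane: "lin a (comb3 q1 q2 q3 u v w) = 0" for u v w
    using tangent_point_in_plane[OF q(1)] tangent_point_in_plane[OF q(2)] tangent_point_in_plane[OF q(3)]
    by (simp add: lin_comb3)
  define P where "P = (\<lambda>u v w. F (comb3 q1 q2 q3 u v w))"
  interpret hyperoval_function b P
  proof unfold_locales
    show "CARD('k) = 4" "b * b = b + 1" by (fact card_gf4, fact b)
    show "P (c * x1) (c * x2) (c * x3) = c * P x1 x2 x3" for c x1 x2 x3
      unfolding P_def comb3_scale F_scale ..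
    show "P a1 a2 a3 = 0" if "(a1, a2, a3) \<in> hyperoval_base b" for a1 a2 a3
      using base[OF that] unfolding P_def tangent_point_def by simp
    show "P (a1 + t * b1) (a2 + t * b2) (a3 + t * b3) = t * t * P (a1 + b1) (a2 + b2) (a3 + b3)"
      if "(a1, a2, a3) \<in> hyperoval_base b" "(b1, b2, b3) \<in> hyperoval_base b" for a1 a2 a3 b1 b2 b3 t
      unfolding P_def comb3_add comb3_scale[symmetric]
      using F_secant[OF base[OF that(1)] base[OF that(2)], of t] by (simp add: comb3_scale)
    show "P (a1 + y1) (a2 + y2) (a3 + y3) + (b + 1) * P (a1 + b * y1) (a2 + b * y2) (a3 + b * y3)
        + b * P (a1 + (b + 1) * y1) (a2 + (b + 1) * y2) (a3 + (b + 1) * y3) = P y1 y2 y3"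
      if "(a1, a2, a3) \<in> hyperoval_base b" for a1 a2 a3 y1 y2 y3
      unfolding P_def comb3_add comb3_scale[symmetric]
      using F_tangent_relation[OF base[OF that] in_plane[of y1 y2 y3] b] by (simp add: comb3_scale)
  qed
  have "P u v w = 0" unfolding P_def by (rule x(2))
  then consider "u = 0 \<and> v = 0 \<and> w = 0"
    | c a1 a2 a3 where "(a1, a2, a3) \<in> hyperoval_base b" "u = c * a1" "v = c * a2" "w = c * a3"
    | "P 1 1 0 = 0"
    using zero_cases by blast
  then show ?thesis
  proof cases
    case 1 then show ?thesis using x(1) unfolding comb3_def by simp
  next
    case (2 c a1 a2 a3)
    then have "comb3 q1 q2 q3 u v w = (\<lambda>i. c * comb3 q1 q2 q3 a1 a2 a3 i)" by (simp add: comb3_scale)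
    moreover from this have "c \<noteq> 0" using x(1) by auto
    ultimately show ?thesis using tangent_point_scale[OF base[OF 2(1)]] by simp
  next
    case 3
    then show ?thesis using F_add_tangent_points_neq_0[OF q(1,2) q12] unfolding P_def comb3_def by simp
  qed
qed

lemma plane_point_is_tangent_point:
  fixes p :: "nat \<Rightarrow> 4 \<Rightarrow> 'k"
  assumes a: "a \<noteq> (\<lambda>_. 0)" and t: "\<And>k. k < 5 \<Longrightarrow> tangent_point a (p k)"
    and d: "\<And>k l. k < 5 \<Longrightarrow> l < 5 \<Longrightarrow> k \<noteq> l \<Longrightarrow> proj_pt (p k) \<noteq> proj_pt (p l)"
    and x: "x \<noteq> (\<lambda>_. 0)" "F x = 0" "lin a x = 0"
  shows "tangent_point a x"
proof -
  obtain q1 q2 q3 b where q: "tangent_point a q1" "tangent_point a q2" "tangent_point a q3"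
    and frame: "tangent_point a (comb3 q1 q2 q3 1 1 1)" "tangent_point a (comb3 q1 q2 q3 1 b (b * b))"
    and b: "b * b = b + 1" and q12: "proj_pt q1 \<noteq> proj_pt q2"
    and span: "{x. lin a x = 0} = (\<lambda>(u, v, w). comb3 q1 q2 q3 u v w) ` UNIV"
    by (rule five_tangent_points_frame[OF a t d]) blast+
  from x(3) have "x \<in> {x. lin a x = 0}" by simp
  then obtain u v w where "x = comb3 q1 q2 q3 u v w" unfolding span by auto
  then show ?thesis using frame_zero_is_tangent_point[OF q frame b q12] x(1,2) by simp
qed

end

section \<open>Planes H with t(H) = 5\<close>

lemma tangent_plane_eq_iff:
  fixes f :: "'k::field mpoly4"
  shows "tangent_plane f x = proj_pt a \<longleftrightarrow> (\<exists>c. c \<noteq> 0 \<and> grad f x = (\<lambda>i. c * a i))"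
proof
  assume "tangent_plane f x = proj_pt a"
  then obtain c where "c \<noteq> 0" "a = (\<lambda>i. c * grad f x i)"
    using proj_pt_eqD[of "grad f x" a] unfolding tangent_plane_def by blast
  then show "\<exists>c. c \<noteq> 0 \<and> grad f x = (\<lambda>i. c * a i)"
    by (intro exI[of _ "inverse c"]) (simp add: fun_eq_iff)
next
  assume "\<exists>c. c \<noteq> 0 \<and> grad f x = (\<lambda>i. c * a i)"
  then obtain c where "c \<noteq> 0" "grad f x = (\<lambda>i. c * a i)" by blast
  then show "tangent_plane f x = proj_pt a" unfolding tangent_plane_def by (simp add: proj_pt_scale)
qed

context quartic_form
begin

lemma tcount_eq_card_tangent_points: "tcount f a = card {proj_pt x | x. tangent_point a x}"
  unfolding tcount_def tangent_point_def tangent_plane_eq_iff by simp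

end

context quartic_no_line
begin

lemma plane_point_is_tangent_point_if_tcount_5:
  assumes a: "a \<noteq> (\<lambda>_. 0)" and five: "tcount f a = 5"
    and x: "x \<noteq> (\<lambda>_. 0)" "F x = 0" "lin a x = 0"
  shows "tangent_point a x"
proof -
  let ?S = "{proj_pt x | x. tangent_point a x}"
  have card_S: "card ?S = 5" using five by (simp add: tcount_eq_card_tangent_points)
  then have "finite ?S" by (intro card_ge_0_finite) simp
  then obtain xs where xs: "set xs = ?S" "distinct xs" using finite_distinct_list by blast
  have len: "length xs = 5" using distinct_card[OF xs(2)] xs(1) card_S by simp
  define p where "p k = (SOME y. tangent_point a y \<and> proj_pt y = xs ! k)" for k
  have p: "tangent_point a (p k) \<and> proj_pt (p k) = xs ! k" if "k < 5" for k
  proof -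
    have "xs ! k \<in> ?S" using nth_mem[of k xs] that len xs(1) by simp
    then have "\<exists>y. tangent_point a y \<and> proj_pt y = xs ! k" by blast
    then show ?thesis unfolding p_def by (rule someI_ex)
  qed
  have distinct_p: "proj_pt (p k) \<noteq> proj_pt (p l)" if "k < 5" "l < 5" "k \<noteq> l" for k l
    using p[OF that(1)] p[OF that(2)] nth_eq_iff_index_eq[OF xs(2)] that len by simp
  show ?thesis by (rule plane_point_is_tangent_point[where p = p, OF a _ _ x]) (simp_all add: p[THEN conjunct1] distinct_p)
qed

definition plane_points :: "(4 \<Rightarrow> 'k) \<Rightarrow> (4 \<Rightarrow> 'k) set set" where
  "plane_points a = {proj_pt x | x. x \<noteq> (\<lambda>_. 0) \<and> F x = 0 \<and> lin a x = 0}"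

lemma card_plane_points:
  assumes "a \<noteq> (\<lambda>_. 0)" "tcount f a = 5"
  shows "card (plane_points a) = 5"
proof -
  have "plane_points a = {proj_pt x | x. tangent_point a x}"
  proof (intro Set.set_eqI iffI)
    fix P assume "P \<in> plane_points a"
    then obtain x where "P = proj_pt x" "x \<noteq> (\<lambda>_. 0)" "F x = 0" "lin a x = 0"
      unfolding plane_points_def by blast
    moreover from this have "tangent_point a x"
      using plane_point_is_tangent_point_if_tcount_5[OF assms] by simp
    ultimately show "P \<in> {proj_pt x | x. tangent_point a x}" by blast
  next
    fix P assume "P \<in> {proj_pt x | x. tangent_point a x}"
    then obtain x where "P = proj_pt x" "tangent_point a x" by blast
    moreover from this have "lin a x = 0" by (simp add: tangent_point_in_plane)
    ultimately show "P \<in> plane_points a" unfolding plane_points_def tangent_point_def by blast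
  qed
  then show ?thesis using assms(2) by (simp add: tcount_eq_card_tangent_points)
qed

lemma no_common_point_of_planes_with_five_tangent_points:
  assumes a1: "a1 \<noteq> (\<lambda>_. 0)" and a2: "a2 \<noteq> (\<lambda>_. 0)" and d: "proj_pt a1 \<noteq> proj_pt a2"
    and five: "tcount f a1 = 5" "tcount f a2 = 5"
  shows "\<not> (\<exists>x. x \<noteq> (\<lambda>_. 0) \<and> F x = 0 \<and> lin a1 x = 0 \<and> lin a2 x = 0)"
proof
  assume "\<exists>x. x \<noteq> (\<lambda>_. 0) \<and> F x = 0 \<and> lin a1 x = 0 \<and> lin a2 x = 0"
  then obtain x where x: "x \<noteq> (\<lambda>_. 0)" "F x = 0" "lin a1 x = 0" "lin a2 x = 0" by blast
  have "tangent_point a1 x" "tangent_point a2 x"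
    using plane_point_is_tangent_point_if_tcount_5[OF a1 five(1)] plane_point_is_tangent_point_if_tcount_5[OF a2 five(2)]
      x by simp_all
  then have "tangent_plane f x = proj_pt a1" "tangent_plane f x = proj_pt a2"
    unfolding tangent_plane_eq_iff tangent_point_def by simp_all
  then show False using d by simp
qed

end

section \<open>At most 13 points of the surface in an affine plane\<close>

context gf4
begin

text \<open>The lines through a point of the affine plane over the field are indexed by the five
  directions of type \<open>'k option\<close>: Some t for slope t, None for the second coordinate axis.\<close>

definition line_point :: "'k \<times> 'k \<Rightarrow> 'k option \<Rightarrow> 'k \<Rightarrow> 'k \<times> 'k" where
  "line_point P d s = (case d of None \<Rightarrow> (fst P, snd P + s) | Some t \<Rightarrow> (fst P + s, snd P + s * t))"

lemma three_lines_avoiding: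
  assumes "card M \<le> 2" "P \<notin> M"
  obtains d1 d2 d3 where "d1 \<noteq> d2" "d1 \<noteq> d3" "d2 \<noteq> d3"
    "\<And>d s. d \<in> {d1, d2, d3} \<Longrightarrow> line_point P d s \<notin> M"
proof -
  define dir where
    "dir Q = (if fst Q = fst P then None else Some ((snd Q + snd P) / (fst Q + fst P)))" for Q
  have in_dir: "d \<in> dir ` M" if "line_point P d s \<in> M" for d s
  proof -
    have "s \<noteq> 0"
    proof
      assume "s = 0"
      then have "line_point P d s = P" by (cases d) (simp_all add: line_point_def)
      then show False using that assms(2) by simp
    qed
    then have "dir (line_point P d s) = d"
      by (cases d) (simp_all add: dir_def line_point_def add_eq_0_iff_eq)
    then show ?thesis using that by (metis image_eqI)
  qed
  have "card (dir ` M) + 3 \<le> CARD('k option)"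
    using card_image_le[of M dir] assms(1) card_gf4 by simp
  then obtain B where B: "B \<inter> dir ` M = {}" "card B = 3" by (rule exists_subset_avoiding)
  then obtain d1 d2 d3 where d: "B = {d1, d2, d3}" "d1 \<noteq> d2" "d2 \<noteq> d3" "d1 \<noteq> d3"
    unfolding card_3_iff by blast
  show thesis
  proof (rule that)
    fix d s assume "d \<in> {d1, d2, d3}"
    then have "d \<notin> dir ` M" using B(1) d(1) by blast
    then show "line_point P d s \<notin> M" using in_dir by blast
  qed (use d in simp_all)
qed

lemma quadratic_coeff_eq_0:
  assumes dist: "d1 \<noteq> d2" "d1 \<noteq> d3" "d2 \<noteq> d3"
    and some: "\<And>s. Some s \<in> {d1, d2, d3} \<Longrightarrow> a + b * s + c * s^2 = (0::'k)"
    and none: "None \<in> {d1, d2, d3} \<Longrightarrow> b = 0"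
  shows "c = 0"
proof (cases "None \<in> {d1, d2, d3}")
  case True
  then obtain s t where st: "s \<noteq> t" "Some s \<in> {d1, d2, d3}" "Some t \<in> {d1, d2, d3}"
    using dist by (cases d1; cases d2; cases d3) auto
  have "(a + b * s + c * s^2) + (a + b * t + c * t^2) = 0" using some st by simp
  then have "c * ((s + t) * (s + t)) = 0" using none True by (simp add: algebra_simps power2_eq_square)
  then show ?thesis using st(1) by (simp add: add_eq_0_iff_eq)
next
  case False
  then obtain s t r where d: "d1 = Some s" "d2 = Some t" "d3 = Some r"
    by (cases d1; cases d2; cases d3) auto
  have st: "s \<noteq> t" "s \<noteq> r" "t \<noteq> r" using dist d by auto
  have secant: "b + c * (x + y) = 0" if "x \<noteq> y" "Some x \<in> {d1, d2, d3}" "Some y \<in> {d1, d2, d3}" for x y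
  proof -
    have "(a + b * x + c * x^2) + (a + b * y + c * y^2) = 0" using some that by simp
    then have "(x + y) * (b + c * (x + y)) = 0" by (simp add: algebra_simps power2_eq_square)
    then show ?thesis using that(1) by (simp add: add_eq_0_iff_eq)
  qed
  have "(b + c * (s + t)) + (b + c * (s + r)) = 0" using secant[of s t] secant[of s r] st d by simp
  then have "c * (t + r) = 0" by (simp add: algebra_simps)
  then show ?thesis using st(3) by (simp add: add_eq_0_iff_eq)
qed

end

context quartic_form
begin

lemma polar_of_line_on_surface:
  assumes "F A = 0" "\<And>s. F (\<lambda>i. A i + s * D i) = 0"
  shows "polar A D = F D" "polar D A = 0"
proof -
  let ?b = "polar A D + F D" and ?c = "quad_coeff A D"
  have e1: "polar D A + ?b + ?c = 0"
    using expand_line[of A 1 D] assms(1) assms(2)[of 1] by (simp add: algebra_simps)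
  have e2: "polar D A + ?b * \<omega> + ?c * \<omega> * \<omega> = 0"
    using expand_line[of A \<omega> D] assms(1) assms(2)[of \<omega>] by (simp add: algebra_simps eval_nat_numeral omega_sq)
  have e3: "polar D A + ?b * (\<omega> + 1) + ?c * (\<omega> + 1) * (\<omega> + 1) = 0"
    using expand_line[of A "\<omega> + 1" D] assms(1) assms(2)[of "\<omega> + 1"] by (simp add: algebra_simps eval_nat_numeral omega_sq)
  from quadratic_vanishing_on_units[OF e1 e2 e3]
  show "polar A D = F D" "polar D A = 0" by (simp_all add: add_eq_0_iff_eq)
qed

lemma polar_eq_0_of_parallel_lines_on_surface:
  assumes "v1 \<noteq> v2" and on_surface: "\<And>v s. v \<in> {v1, v2} \<Longrightarrow> F (\<lambda>i. A i + v * E i + s * D i) = 0"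
  shows "polar D E = 0"
proof -
  have "polar D A + v * polar D E = 0" if "v \<in> {v1, v2}" for v
  proof -
    have "polar D (\<lambda>i. A i + v * E i) = 0"
      by (rule polar_of_line_on_surface(2)) (use on_surface[OF that, of 0] on_surface[OF that] in simp_all)
    then show ?thesis using polar_linear_right[of D 1 A v E] by simp
  qed
  then have "(polar D A + v1 * polar D E) + (polar D A + v2 * polar D E) = 0" by simp
  then have "(v1 + v2) * polar D E = 0" by (simp add: algebra_simps)
  then show ?thesis using assms(1) by (simp add: add_eq_0_iff_eq)
qed

lemma polar_eq_0_if_two_points_missing:
  fixes A0 D1 D2 :: "4 \<Rightarrow> 'k" and M :: "('k \<times> 'k) set"
  defines "pt p \<equiv> (\<lambda>i. A0 i + fst p * D1 i + snd p * D2 i)"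
  assumes card_M: "card M \<le> 2" and on_surface: "\<And>p. p \<notin> M \<Longrightarrow> F (pt p) = 0"
  shows "polar D1 D2 = 0" "polar D2 D1 = 0"
proof -
  have card_proj: "card (g ` M) + 2 \<le> CARD('k)" for g :: "'k \<times> 'k \<Rightarrow> 'k"
    using card_image_le[of M g] card_M card_gf4 by simp
  obtain B1 where B1: "B1 \<inter> snd ` M = {}" "card B1 = 2" by (rule exists_subset_avoiding[OF card_proj])
  obtain B2 where B2: "B2 \<inter> fst ` M = {}" "card B2 = 2" by (rule exists_subset_avoiding[OF card_proj])
  obtain v1 v2 where v: "B1 = {v1, v2}" "v1 \<noteq> v2" using B1(2) unfolding card_2_iff by blast
  obtain u1 u2 where u: "B2 = {u1, u2}" "u1 \<noteq> u2" using B2(2) unfolding card_2_iff by blast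
  have "v \<notin> snd ` M" if "v \<in> {v1, v2}" for v using B1(1) v(1) that by blast
  then have v_full: "(s, v) \<notin> M" if "v \<in> {v1, v2}" for s v using that rev_image_eqI[of "(s, v)" M v snd] by auto
  have "u \<notin> fst ` M" if "u \<in> {u1, u2}" for u using B2(1) u(1) that by blast
  then have u_full: "(u, s) \<notin> M" if "u \<in> {u1, u2}" for s u using that rev_image_eqI[of "(u, s)" M u fst] by auto
  have pt_swap: "pt (s, v) = (\<lambda>i. A0 i + v * D2 i + s * D1 i)" "pt (v, s) = (\<lambda>i. A0 i + v * D1 i + s * D2 i)"
    for s v by (simp_all add: pt_def fun_eq_iff algebra_simps)
  show "polar D1 D2 = 0"
  proof (rule polar_eq_0_of_parallel_lines_on_surface[OF v(2)])
    fix v s assume "v \<in> {v1, v2}"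
    then have "F (pt (s, v)) = 0" by (intro on_surface v_full)
    then show "F (\<lambda>i. A0 i + v * D2 i + s * D1 i) = 0" by (simp only: pt_swap(1))
  qed
  show "polar D2 D1 = 0"
  proof (rule polar_eq_0_of_parallel_lines_on_surface[OF u(2)])
    fix u s assume "u \<in> {u1, u2}"
    then have "F (pt (u, s)) = 0" by (intro on_surface u_full)
    then show "F (\<lambda>i. A0 i + u * D1 i + s * D2 i) = 0" by (simp only: pt_swap(2))
  qed
qed

lemma affine_plane_points_le_13:
  assumes nonzero: "\<And>u v. (u, v) \<noteq> (0, 0) \<Longrightarrow> F (\<lambda>i. u * D1 i + v * D2 i) \<noteq> 0"
  shows "card {p :: 'k \<times> 'k. F (\<lambda>i. A0 i + fst p * D1 i + snd p * D2 i) = 0} \<le> 13"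
proof (rule ccontr)
  define pt where "pt p = (\<lambda>i. A0 i + fst p * D1 i + snd p * D2 i)" for p :: "'k \<times> 'k"
  define M where "M = {p. F (pt p) \<noteq> 0}"
  assume "\<not> ?thesis"
  moreover have "card M + card {p. F (pt p) = 0} = card (M \<union> {p. F (pt p) = 0})"
    by (rule card_Un_disjoint[symmetric]) (auto simp: M_def)
  moreover have "M \<union> {p. F (pt p) = 0} = UNIV" by (auto simp: M_def)
  ultimately have card_M: "card M \<le> 2" using card_gf4 by (simp add: pt_def)
  have on_surface: "F (pt p) = 0" if "p \<notin> M" for p using that unfolding M_def by simp
  have "F (\<lambda>i. A0 i + fst p * D1 i + snd p * D2 i) = 0" if "p \<notin> M" for p
    using on_surface[OF that] unfolding pt_def .
  note polar_D = polar_eq_0_if_two_points_missing[OF card_M this]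
  have "M \<noteq> UNIV" using card_M card_gf4 by auto
  then obtain P where P: "P \<notin> M" by blast
  obtain d1 d2 d3 where d: "d1 \<noteq> d2" "d1 \<noteq> d3" "d2 \<noteq> d3"
    and avoid: "\<And>d s. d \<in> {d1, d2, d3} \<Longrightarrow> line_point P d s \<notin> M"
    by (rule three_lines_avoiding[OF card_M P], rule that)
  define dir where "dir d = (case d of None \<Rightarrow> D2 | Some t \<Rightarrow> (\<lambda>i. D1 i + t * D2 i))" for d
  have "pt (line_point P d s) = (\<lambda>i. pt P i + s * dir d i)" for d s
    by (cases d) (simp_all add: pt_def line_point_def dir_def fun_eq_iff algebra_simps)
  then have polar_dir: "polar (pt P) (dir d) = F (dir d)" if "d \<in> {d1, d2, d3}" for d
    using polar_of_line_on_surface(1)[of "pt P" "dir d"] on_surface[OF P] on_surface[OF avoid[OF that]]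
    by simp
  have F_D1_D2: "F (\<lambda>i. D1 i + s * D2 i) = F D1 + quad_coeff D1 D2 * s^2 + F D2 * s" for s
    using expand_line[of D1 s D2] polar_D by simp
  have quad_0: "quad_coeff D1 D2 = 0"
  proof (rule quadratic_coeff_eq_0[OF d])
    fix s assume "Some s \<in> {d1, d2, d3}"
    then have "polar (pt P) D1 + s * polar (pt P) D2 = F D1 + quad_coeff D1 D2 * s^2 + F D2 * s"
      using polar_dir[of "Some s"] polar_linear_right[of "pt P" 1 D1 s D2] F_D1_D2 by (simp add: dir_def)
    then have "(polar (pt P) D1 + s * polar (pt P) D2) + (F D1 + quad_coeff D1 D2 * s^2 + F D2 * s) = 0"
      by (rule add_eq_0_iff_eq[THEN iffD2])
    then show "(F D1 + polar (pt P) D1) + (F D2 + polar (pt P) D2) * s + quad_coeff D1 D2 * s^2 = 0"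
      by (simp add: algebra_simps)
  next
    assume "None \<in> {d1, d2, d3}"
    then have "polar (pt P) D2 = F D2" using polar_dir[of None] by (simp add: dir_def)
    then show "F D2 + polar (pt P) D2 = 0" by simp
  qed
  have "F D2 \<noteq> 0" using nonzero[of 0 1] by simp
  have "F (\<lambda>i. D1 i + (F D1 / F D2) * D2 i) = F D1 + F D2 * (F D1 / F D2)"
    using F_D1_D2[of "F D1 / F D2"] quad_0 by (simp only: mult_zero_left add_0_right)
  also have "\<dots> = 0" using \<open>F D2 \<noteq> 0\<close> by simp
  finally show False using nonzero[of 1 "F D1 / F D2"] by simp
qed

end

section \<open>The bound\<close>

context quartic_no_line
begin

lemma rat_points_subset_planes_and_slices:
  "rat_points f \<subseteq> plane_points a1 \<union> plane_points a2 \<union>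
     (\<Union>t\<in>{1, \<omega>, \<omega> + 1}. proj_pt ` {x. lin a2 x = 1 \<and> lin a1 x = t \<and> F x = 0})"
proof
  fix P assume "P \<in> rat_points f"
  then obtain x where x: "P = proj_pt x" "x \<noteq> (\<lambda>_. 0)" "F x = 0" unfolding rat_points_def by auto
  consider "lin a1 x = 0" | "lin a2 x = 0" | "lin a1 x \<noteq> 0" "lin a2 x \<noteq> 0" by blast
  then show "P \<in> plane_points a1 \<union> plane_points a2 \<union>
     (\<Union>t\<in>{1, \<omega>, \<omega> + 1}. proj_pt ` {x. lin a2 x = 1 \<and> lin a1 x = t \<and> F x = 0})"
  proof cases
    case 1 then show ?thesis using x unfolding plane_points_def by blast
  next
    case 2 then show ?thesis using x unfolding plane_points_def by blast
  next
    case 3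
    define t where "t = inverse (lin a2 x) * lin a1 x"
    define y where "y = (\<lambda>i. inverse (lin a2 x) * x i)"
    have "proj_pt y = P" unfolding y_def x(1) using 3 by (intro proj_pt_scale) simp
    moreover have "lin a2 y = 1" "lin a1 y = t" "F y = 0"
      unfolding y_def t_def lin_scale F_scale using 3 x(3) by simp_all
    moreover have "t \<in> {1, \<omega>, \<omega> + 1}" using gf4_cases[of t] 3 unfolding t_def by auto
    ultimately show ?thesis by blast
  qed
qed

lemma card_slice_le_13:
  assumes a1: "a1 \<noteq> (\<lambda>_. 0)" and e1: "lin a1 e1 = 1" "lin a2 e1 = 0" and e2: "lin a1 e2 = 0" "lin a2 e2 = 1"
    and disjoint: "\<And>x. x \<noteq> (\<lambda>_. 0) \<Longrightarrow> F x = 0 \<Longrightarrow> lin a1 x = 0 \<Longrightarrow> lin a2 x = 0 \<Longrightarrow> False"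
  shows "card {x. lin a2 x = 1 \<and> lin a1 x = t \<and> F x = 0} \<le> 13"
proof -
  obtain D1 D2 where span: "{x. lin a1 x = 0 \<and> lin a2 x = 0} = range (\<lambda>(u, v). (\<lambda>i. u * D1 i + v * D2 i))"
    and indep: "\<And>u v. (\<lambda>i. u * D1 i + v * D2 i) = (\<lambda>_. 0) \<Longrightarrow> u = 0 \<and> v = 0"
    by (rule basis_of_two_hyperplanes[OF a1 e2], rule that)
  have nonzero: "F (\<lambda>i. u * D1 i + v * D2 i) \<noteq> 0" if "(u, v) \<noteq> (0, 0)" for u v
  proof
    assume "F (\<lambda>i. u * D1 i + v * D2 i) = 0"
    moreover have "(\<lambda>i. u * D1 i + v * D2 i) \<in> {x. lin a1 x = 0 \<and> lin a2 x = 0}" unfolding span by auto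
    moreover have "(\<lambda>i. u * D1 i + v * D2 i) \<noteq> (\<lambda>_. 0)"
    proof
      assume "(\<lambda>i. u * D1 i + v * D2 i) = (\<lambda>_. 0)"
      then have "u = 0 \<and> v = 0" by (rule indep)
      then show False using that by simp
    qed
    ultimately show False using disjoint[of "\<lambda>i. u * D1 i + v * D2 i"] by simp
  qed
  define A0 where "A0 = (\<lambda>i. t * e1 i + e2 i)"
  define pt where "pt p = (\<lambda>i. A0 i + fst p * D1 i + snd p * D2 i)" for p :: "'k \<times> 'k"
  have "{x. lin a2 x = 1 \<and> lin a1 x = t \<and> F x = 0} \<subseteq> pt ` {p. F (pt p) = 0}"
  proof
    fix x assume x: "x \<in> {x. lin a2 x = 1 \<and> lin a1 x = t \<and> F x = 0}"
    have "lin a1 A0 = t" "lin a2 A0 = 1" unfolding A0_def using e1 e2 by (simp_all add: lin_add lin_scale)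
    then have "(\<lambda>i. x i + A0 i) \<in> {x. lin a1 x = 0 \<and> lin a2 x = 0}" using x by (simp add: lin_add)
    then obtain u v where uv: "(\<lambda>i. x i + A0 i) = (\<lambda>i. u * D1 i + v * D2 i)" unfolding span by auto
    have "x i = pt (u, v) i" for i
    proof -
      have "x i = (x i + A0 i) + A0 i" by (simp add: add.assoc)
      also have "\<dots> = (u * D1 i + v * D2 i) + A0 i" using fun_cong[OF uv, of i] by simp
      finally show ?thesis unfolding pt_def by (simp add: algebra_simps)
    qed
    then have "x = pt (u, v)" by blast
    then show "x \<in> pt ` {p. F (pt p) = 0}" using x by auto
  qed
  then have "card {x. lin a2 x = 1 \<and> lin a1 x = t \<and> F x = 0} \<le> card (pt ` {p. F (pt p) = 0})"
    by (intro card_mono) simp_all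
  also have "\<dots> \<le> card {p. F (pt p) = 0}" by (rule card_image_le) simp
  also have "\<dots> \<le> 13" unfolding pt_def by (rule affine_plane_points_le_13[OF nonzero])
  finally show ?thesis .
qed

lemma card_rat_points_le_49:
  assumes a1: "a1 \<noteq> (\<lambda>_. 0)" and a2: "a2 \<noteq> (\<lambda>_. 0)" and d: "proj_pt a1 \<noteq> proj_pt a2"
    and five: "tcount f a1 = 5" "tcount f a2 = 5"
  shows "card (rat_points f) \<le> 49"
proof -
  note disjoint = no_common_point_of_planes_with_five_tangent_points[OF a1 a2 d five]
  have card_planes: "card (plane_points a1) = 5" "card (plane_points a2) = 5"
    using card_plane_points a1 a2 five by simp_all
  have "plane_points a1 \<noteq> {}" "plane_points a2 \<noteq> {}" using card_planes by auto
  then obtain x1 x2 where x1: "x1 \<noteq> (\<lambda>_. 0)" "F x1 = 0" "lin a1 x1 = 0"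
    and x2: "x2 \<noteq> (\<lambda>_. 0)" "F x2 = 0" "lin a2 x2 = 0"
    unfolding plane_points_def by blast
  have "lin a2 x1 \<noteq> 0" "lin a1 x2 \<noteq> 0" using disjoint x1 x2 by auto
  then have e: "lin a1 (\<lambda>i. inverse (lin a1 x2) * x2 i) = 1" "lin a2 (\<lambda>i. inverse (lin a1 x2) * x2 i) = 0"
    "lin a1 (\<lambda>i. inverse (lin a2 x1) * x1 i) = 0" "lin a2 (\<lambda>i. inverse (lin a2 x1) * x1 i) = 1"
    using x1 x2 by (simp_all add: lin_scale)
  have slice: "card (proj_pt ` {x. lin a2 x = 1 \<and> lin a1 x = t \<and> F x = 0}) \<le> 13" for t
    using card_image_le[of "{x. lin a2 x = 1 \<and> lin a1 x = t \<and> F x = 0}" proj_pt]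
      card_slice_le_13[OF a1 e, of t] disjoint by fastforce
  let ?slices = "\<Union>t\<in>{1, \<omega>, \<omega> + 1}. proj_pt ` {x. lin a2 x = 1 \<and> lin a1 x = t \<and> F x = 0}"
  have "card (rat_points f) \<le> card (plane_points a1 \<union> plane_points a2 \<union> ?slices)"
    by (rule card_mono[OF _ rat_points_subset_planes_and_slices]) simp
  also have "\<dots> \<le> card (plane_points a1 \<union> plane_points a2) + card ?slices" by (rule card_Un_le)
  also have "\<dots> \<le> card (plane_points a1) + card (plane_points a2) + card ?slices"
    using card_Un_le[of "plane_points a1" "plane_points a2"] by simp
  also have "card ?slices \<le> (\<Sum>t\<in>{1, \<omega>, \<omega> + 1}. card (proj_pt ` {x. lin a2 x = 1 \<and> lin a1 x = t \<and> F x = 0}))"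
    by (rule card_UN_le) simp
  also have "\<dots> \<le> (\<Sum>t\<in>{1, \<omega>, \<omega> + 1}. 13)" by (rule sum_mono[OF slice])
  also have "\<dots> \<le> 3 * 13" using card_insert_le_m1[of 3 "{\<omega>, \<omega> + 1}"] by simp
  finally show ?thesis using card_planes by simp
qed

end

theorem mainTheorem6:
  fixes f :: "'k::{field,finite} mpoly4" and a1 a2 :: "4 \<Rightarrow> 'k"
  assumes "CARD('k) = 4"
    and "f \<noteq> 0" and "homogeneous_of_degree f 4"
    and "Factorial_Ring.irreducible f"
    and "\<not> contains_rat_line f"
    and "\<forall>x. x \<noteq> (\<lambda>_. 0) \<and> eval4 f x = 0 \<longrightarrow> nonsingular_at f x"
    and "a1 \<noteq> (\<lambda>_. 0)" and "a2 \<noteq> (\<lambda>_. 0)" and "proj_pt a1 \<noteq> proj_pt a2"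
    and "tcount f a1 = 5" and "tcount f a2 = 5"
  shows "\<not> (\<exists>x. x \<noteq> (\<lambda>_. 0) \<and> eval4 f x = 0 \<and> lin a1 x = 0 \<and> lin a2 x = 0)
         \<and> card (rat_points f) \<le> 49"
proof -
  obtain \<omega> :: 'k where "\<omega> * \<omega> = \<omega> + 1" using card4_exists_omega[OF assms(1)] by blast
  then interpret quartic_no_line \<omega> f by unfold_locales (use assms in auto)
  show ?thesis
    using no_common_point_of_planes_with_five_tangent_points[OF assms(7-11)]
      card_rat_points_le_49[OF assms(7-11)] by blast
qed

end
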